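(* Define: - $K_n=\overline{\Sigma}_c^{-1}H_n^TR_n^{-1}$; - $\mathcal{K}=\mathrm{diag}(K_1,\dots,K_N)$ (block diagonal); - $\mathcal{H}=\mathrm{diag}(H_1,\dots,H_N)$ (block diagonal). Then for every $0<\varepsilon<1$ there exist a deterministic time $t_\varepsilon$ and a constant $c_\varepsilon$ such that $$\mathbf{z}^T\big(\beta_t\overline{L}\otimes I_M+\alpha_t\widetilde{\mathcal{K}}\mathcal{H}\big)\mathbf{z}\ge c_\varepsilon\beta_t\|\mathbf{z}_{\mathcal{C}^\perp}\|^2$$ for all $t\ge t_\varepsilon$, all $\mathbf{z}\in\mathbb{R}^{NM}$, and all matrices $\widetilde{\mathcal{K}}\in\mathbb{R}^{NM\times\sum_nM_n}$ with $\|\widetilde{\mathcal{K}}\mathcal{H}-\mathcal{K}\mathcal{H}\|\le\varepsilon$.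
   Context: The data are as follows. - $H_n\in\mathbb{R}^{M_n\times M}$ for $n=1,\dots,N$. - $R_n$ are symmetric positive definite $M_n\times M_n$ matrices. - $\overline{\Sigma}_c=\frac1N\sum_{n=1}^NH_n^TR_n^{-1}H_n$ is assumed invertible. - $\overline{L}$ is the expectation of a random $N\times N$ graph Laplacian of simple undirected graphs on $\{1,\dots,N\}$, with $\lambda_2(\overline{L})>0$, where $\lambda_2$ is the second smallest eigenvalue. - The weights are $\alpha_t=a/(t+1)^{\tau_1}$ and $\beta_t=b/(t+1)^{\tau_2}$ with $a,b>0$, $0<\tau_2\le\tau_1\le1$, and $\tau_1>\tau_2+\frac1{2+\varepsilon_1}+\frac12$ for some $\varepsilon_1>0$. The consensus subspace is $\mathcal{C}=\{\mathbf{1}_N\otimes\mathbf{a}:\mathbf{a}\in\mathbb{R}^M\}$, and $\mathbf{z}_{\mathcal{C}^\perp}$ is the orthogonal projection of $\mathbf{z}$ onto the orthogonal complement $\mathcal{C}^\perp$. $\otimes$ is the Kronecker product and $\|\cdot\|$ the Euclidean norm or induced matrix 2-norm. *)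

theory Defs
  imports "Jordan_Normal_Form.Char_Poly" "HOL-Probability.Probability"
begin

definition vnorm :: "real Matrix.vec \<Rightarrow> real" where
  "vnorm v = sqrt (scalar_prod v v)"

definition mnorm2 :: "real mat \<Rightarrow> real" where
  "mnorm2 A = Sup {vnorm (A *\<^sub>v v) | v. v \<in> carrier_vec (dim_col A) \<and> vnorm v \<le> 1}"

definition minv :: "real mat \<Rightarrow> real mat" where
  "minv A = (SOME B. B \<in> carrier_mat (dim_row A) (dim_row A) \<and> A * B = 1\<^sub>m (dim_row A)
                      \<and> B * A = 1\<^sub>m (dim_row A))"

definition sym_pos_def :: "nat \<Rightarrow> real mat \<Rightarrow> bool" where
  "sym_pos_def k A \<longleftrightarrow> A \<in> carrier_mat k k \<and> A\<^sup>T = A \<and>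
     (\<forall>v \<in> carrier_vec k. v \<noteq> 0\<^sub>v k \<longrightarrow> scalar_prod v (A *\<^sub>v v) > 0)"

definition kron :: "real mat \<Rightarrow> real mat \<Rightarrow> real mat" where
  "kron A B = Matrix.mat (dim_row A * dim_row B) (dim_col A * dim_col B)
     (\<lambda>(i,j). A $$ (i div dim_row B, j div dim_col B) * B $$ (i mod dim_row B, j mod dim_col B))"

definition kron_ones :: "nat \<Rightarrow> real Matrix.vec \<Rightarrow> real Matrix.vec" where
  "kron_ones N a = Matrix.vec (N * dim_vec a) (\<lambda>i. vec_index a (i mod dim_vec a))"

definition consensus :: "nat \<Rightarrow> nat \<Rightarrow> real Matrix.vec set" where
  "consensus N M = {kron_ones N a | a. a \<in> carrier_vec M}"

definition consensus_perp :: "nat \<Rightarrow> nat \<Rightarrow> real Matrix.vec set" where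
  "consensus_perp N M = {v \<in> carrier_vec (N * M). \<forall>c \<in> consensus N M. scalar_prod v c = 0}"

definition proj_perp :: "nat \<Rightarrow> nat \<Rightarrow> real Matrix.vec \<Rightarrow> real Matrix.vec" where
  "proj_perp N M z = (THE p. p \<in> consensus_perp N M \<and> z - p \<in> consensus N M)"

definition simple_graph :: "nat \<Rightarrow> nat set set \<Rightarrow> bool" where
  "simple_graph N E \<longleftrightarrow> E \<subseteq> {{i, j} | i j. i < N \<and> j < N \<and> i \<noteq> j}"

definition laplacian :: "nat \<Rightarrow> nat set set \<Rightarrow> real mat" where
  "laplacian N E = Matrix.mat N N (\<lambda>(i,j).
     if i = j then real (card {k. k < N \<and> {i, k} \<in> E})
     else if {i, j} \<in> E then -1 else 0)"

definition expected_laplacian :: "nat \<Rightarrow> nat set set pmf \<Rightarrow> real mat" where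
  "expected_laplacian N G = Matrix.mat N N (\<lambda>(i,j).
     measure_pmf.expectation G (\<lambda>E. laplacian N E $$ (i,j)))"

(* second smallest eigenvalue (eigenvalues with multiplicity, ascending) *)
definition lambda2 :: "real mat \<Rightarrow> real" where
  "lambda2 A = sorted_list_of_multiset (proots (char_poly A)) ! 1"

end

theory Submission
  imports Defs "HOL-Real_Asymp.Real_Asymp"
begin

(*
  Write z = 1 \<otimes> a + p with a the block average and p = proj_perp z.  The expected Laplacian is
  symmetric and annihilates constants, so the consensus term only sees p, and lambda2 > 0 makes it
  coercive on vectors of zero sum: z\<^sup>T(Lbar \<otimes> I)z \<ge> lam |p|\<^sup>2.  The choice of K gives
  (1 \<otimes> a)\<^sup>T K H (1 \<otimes> a) = |1 \<otimes> a|\<^sup>2, so an eps-perturbation of K H has form at least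
  (1-eps)|1 \<otimes> a|\<^sup>2 minus cross terms of order |1 \<otimes> a| |p| + |p|\<^sup>2.  Since alpha_t/beta_t \<rightarrow> 0
  (tau2 < tau1), completing the square lets half of the Laplacian term absorb the cross terms.
*)

no_notation inner (infix \<open>\<bullet>\<close> 70)
no_notation vec_nth (infixl \<open>$\<close> 90)

section \<open>Quadratic forms and norms\<close>

lemma quadratic_nonneg_imp_discriminant_le:
  fixes a b c :: real
  assumes nonneg: "\<And>t. 0 \<le> a + 2*t*b + t^2*c" and c: "c \<ge> 0"
  shows "b^2 \<le> a*c"
proof (cases "c = 0")
  case True
  have "b = 0"
  proof (rule ccontr)
    assume b: "b \<noteq> 0"
    have "0 \<le> a + 2*(-(\<bar>a\<bar>+1)/(2*b))*b + (-(\<bar>a\<bar>+1)/(2*b))^2*c" using nonneg by blast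
    also have "\<dots> = a - (\<bar>a\<bar>+1)" using b True by (simp add: field_simps)
    finally show False by linarith
  qed
  then show ?thesis using True by simp
next
  case False
  then have c: "c > 0" using c by simp
  have "0 \<le> a + 2*(-b/c)*b + (-b/c)^2*c" using nonneg by blast
  also have "\<dots> = a - b^2/c" using c by (simp add: field_simps power2_eq_square)
  finally show ?thesis using c by (simp add: field_simps)
qed

lemma bilinear_add_expand:
  fixes A :: "real mat"
  assumes A: "A \<in> carrier_mat n n" and x: "x \<in> carrier_vec n" and y: "y \<in> carrier_vec n"
  shows "(x + y) \<bullet> (A *\<^sub>v (x + y)) = x \<bullet> (A *\<^sub>v x) + x \<bullet> (A *\<^sub>v y) + y \<bullet> (A *\<^sub>v x) + y \<bullet> (A *\<^sub>v y)"
proof -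
  have Ax: "A *\<^sub>v x \<in> carrier_vec n" and Ay: "A *\<^sub>v y \<in> carrier_vec n" using A x y by auto
  have "(x + y) \<bullet> (A *\<^sub>v (x + y)) = (x + y) \<bullet> (A *\<^sub>v x + A *\<^sub>v y)"
    using mult_add_distrib_mat_vec[OF A x y] by simp
  also have "\<dots> = x \<bullet> (A *\<^sub>v x + A *\<^sub>v y) + y \<bullet> (A *\<^sub>v x + A *\<^sub>v y)"
    using add_scalar_prod_distrib[OF x y] Ax Ay by simp
  also have "\<dots> = x \<bullet> (A *\<^sub>v x) + x \<bullet> (A *\<^sub>v y) + y \<bullet> (A *\<^sub>v x) + y \<bullet> (A *\<^sub>v y)"
    using scalar_prod_add_distrib[OF x Ax Ay] scalar_prod_add_distrib[OF y Ax Ay] by simp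
  finally show ?thesis .
qed

lemma symmetric_bilinear_swap:
  fixes A :: "real mat"
  assumes A: "A \<in> carrier_mat n n" and sym: "transpose_mat A = A"
    and x: "x \<in> carrier_vec n" and y: "y \<in> carrier_vec n"
  shows "y \<bullet> (A *\<^sub>v x) = x \<bullet> (A *\<^sub>v y)"
proof -
  have "y \<bullet> (A *\<^sub>v x) = (transpose_mat A *\<^sub>v y) \<bullet> x"
    using transpose_vec_mult_scalar[OF A x y] by simp
  also have "\<dots> = x \<bullet> (A *\<^sub>v y)" using sym comm_scalar_prod[of "A *\<^sub>v y" n x] A x y by simp
  finally show ?thesis .
qed

lemma psd_cauchy_schwarz:
  fixes A :: "real mat"
  assumes A: "A \<in> carrier_mat n n" and sym: "transpose_mat A = A"
    and psd: "\<And>v. v \<in> carrier_vec n \<Longrightarrow> 0 \<le> v \<bullet> (A *\<^sub>v v)"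
    and x: "x \<in> carrier_vec n" and y: "y \<in> carrier_vec n"
  shows "(x \<bullet> (A *\<^sub>v y))^2 \<le> (x \<bullet> (A *\<^sub>v x)) * (y \<bullet> (A *\<^sub>v y))"
proof (rule quadratic_nonneg_imp_discriminant_le)
  fix t :: real
  have ty: "t \<cdot>\<^sub>v y \<in> carrier_vec n" using y by simp
  have "(x + t \<cdot>\<^sub>v y) \<bullet> (A *\<^sub>v (x + t \<cdot>\<^sub>v y))
      = x \<bullet> (A *\<^sub>v x) + 2*t*(x \<bullet> (A *\<^sub>v y)) + t^2*(y \<bullet> (A *\<^sub>v y))"
    using bilinear_add_expand[OF A x ty] symmetric_bilinear_swap[OF A sym x y] A x y
    by (simp add: mult_mat_vec power2_eq_square algebra_simps)
  then show "0 \<le> x \<bullet> (A *\<^sub>v x) + 2*t*(x \<bullet> (A *\<^sub>v y)) + t^2*(y \<bullet> (A *\<^sub>v y))"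
    using psd[of "x + t \<cdot>\<^sub>v y"] x ty by simp
qed (rule psd[OF y])

lemma scalar_prod_self_eq_sum_squares: "(x :: real Matrix.vec) \<bullet> x = (\<Sum>i<dim_vec x. (x $ i)^2)"
  unfolding scalar_prod_def by (simp add: power2_eq_square atLeast0LessThan)

lemma scalar_prod_self_nonneg: "0 \<le> (x :: real Matrix.vec) \<bullet> x"
  unfolding scalar_prod_self_eq_sum_squares by (intro sum_nonneg) auto

lemma vnorm_square: "(vnorm x)^2 = x \<bullet> x"
  unfolding vnorm_def using scalar_prod_self_nonneg by simp

lemma vnorm_nonneg: "0 \<le> vnorm x"
  unfolding vnorm_def using scalar_prod_self_nonneg[of x] by simp

lemma scalar_prod_self_eq_zero:
  assumes "x \<in> carrier_vec n" and "x \<bullet> x = (0::real)"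
  shows "x = 0\<^sub>v n"
proof -
  have "\<forall>i\<in>{..<dim_vec x}. (x $ i)^2 = 0"
    using assms(2) unfolding scalar_prod_self_eq_sum_squares
    by (subst sum_nonneg_eq_0_iff[symmetric]) auto
  then show ?thesis using assms(1) by (intro eq_vecI) auto
qed

lemma abs_scalar_prod_le_vnorm:
  assumes x: "x \<in> carrier_vec n" and y: "y \<in> carrier_vec n"
  shows "\<bar>x \<bullet> y\<bar> \<le> vnorm x * vnorm (y :: real Matrix.vec)"
proof -
  have "(x \<bullet> (1\<^sub>m n *\<^sub>v y))^2 \<le> (x \<bullet> (1\<^sub>m n *\<^sub>v x)) * (y \<bullet> (1\<^sub>m n *\<^sub>v y))"
    by (rule psd_cauchy_schwarz[OF one_carrier_mat _ _ x y]) (auto simp: scalar_prod_self_nonneg)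
  then have "sqrt ((x \<bullet> y)^2) \<le> sqrt ((x \<bullet> x) * (y \<bullet> y))" using x y by (simp del: real_sqrt_abs)
  then show ?thesis unfolding vnorm_def by (simp add: real_sqrt_mult)
qed

lemma abs_index_le_vnorm:
  assumes "i < dim_vec x"
  shows "\<bar>x $ i\<bar> \<le> vnorm x"
proof -
  have "(x $ i)^2 \<le> (\<Sum>i<dim_vec x. (x $ i)^2)" using assms by (intro member_le_sum) auto
  then have "sqrt ((x $ i)^2) \<le> sqrt (x \<bullet> x)"
    unfolding scalar_prod_self_eq_sum_squares by (rule real_sqrt_le_mono)
  then show ?thesis unfolding vnorm_def by simp
qed

lemma vnorm_smult: "vnorm (c \<cdot>\<^sub>v v) = \<bar>c\<bar> * vnorm v"
  unfolding vnorm_def by (simp add: power2_eq_square real_sqrt_mult)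

lemma mult_mat_vec_index_sum:
  assumes A: "A \<in> carrier_mat nr nc" and v: "v \<in> carrier_vec nc" and i: "i < nr"
  shows "(A *\<^sub>v v) $ i = (\<Sum>j<nc. A $$ (i,j) * v $ j)"
proof -
  have "(A *\<^sub>v v) $ i = Matrix.row A i \<bullet> v" using A i by simp
  also have "\<dots> = (\<Sum>j<nc. A $$ (i,j) * v $ j)"
    using A v i by (auto simp: scalar_prod_def atLeast0LessThan intro!: sum.cong)
  finally show ?thesis .
qed

lemma scalar_prod_mult_mat_vec_expand:
  assumes A: "A \<in> carrier_mat nr nc" and x: "x \<in> carrier_vec nr" and y: "y \<in> carrier_vec nc"
  shows "x \<bullet> (A *\<^sub>v y) = (\<Sum>i<nr. \<Sum>j<nc. x $ i * A $$ (i,j) * y $ j)"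
  using A x y unfolding scalar_prod_def mult_mat_vec_def
  by (simp add: atLeast0LessThan sum_distrib_left mult.assoc row_def)

lemma smult_mat_mult_mat_vec:
  assumes A: "A \<in> carrier_mat nr nc" and v: "v \<in> carrier_vec nc"
  shows "(k \<cdot>\<^sub>m A) *\<^sub>v v = k \<cdot>\<^sub>v (A *\<^sub>v (v :: real Matrix.vec))"
  by (rule eq_vecI) (use A v in \<open>auto simp: mult_mat_vec_index_sum sum_distrib_left mult.assoc\<close>)

lemma quadratic_form_smult_add:
  fixes A B :: "real mat"
  assumes A: "A \<in> carrier_mat n n" and B: "B \<in> carrier_mat n n" and z: "z \<in> carrier_vec n"
  shows "z \<bullet> ((r \<cdot>\<^sub>m A + s \<cdot>\<^sub>m B) *\<^sub>v z) = r * (z \<bullet> (A *\<^sub>v z)) + s * (z \<bullet> (B *\<^sub>v z))"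
proof -
  have rA: "r \<cdot>\<^sub>m A \<in> carrier_mat n n" and sB: "s \<cdot>\<^sub>m B \<in> carrier_mat n n" using A B by auto
  have "(r \<cdot>\<^sub>m A + s \<cdot>\<^sub>m B) *\<^sub>v z = r \<cdot>\<^sub>v (A *\<^sub>v z) + s \<cdot>\<^sub>v (B *\<^sub>v z)"
    using add_mult_distrib_mat_vec[OF rA sB z] smult_mat_mult_mat_vec[OF A z] smult_mat_mult_mat_vec[OF B z]
    by simp
  then show ?thesis using A B z by (simp add: scalar_prod_add_distrib[of z n])
qed

definition mat_l1_norm :: "real mat \<Rightarrow> real" where
  "mat_l1_norm A = (\<Sum>i<dim_row A. \<Sum>j<dim_col A. \<bar>A $$ (i,j)\<bar>)"

lemma mat_l1_norm_nonneg: "0 \<le> mat_l1_norm A"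
  unfolding mat_l1_norm_def by (simp add: sum_nonneg)

lemma abs_bilinear_le_mat_l1_norm:
  assumes A: "A \<in> carrier_mat nr nc" and x: "x \<in> carrier_vec nr" and y: "y \<in> carrier_vec nc"
  shows "\<bar>x \<bullet> (A *\<^sub>v y)\<bar> \<le> mat_l1_norm A * vnorm x * vnorm y"
proof -
  have "\<bar>x \<bullet> (A *\<^sub>v y)\<bar> \<le> (\<Sum>i<nr. \<Sum>j<nc. \<bar>x $ i * A $$ (i,j) * y $ j\<bar>)"
    unfolding scalar_prod_mult_mat_vec_expand[OF A x y]
    by (rule order.trans[OF sum_abs], rule sum_mono, rule sum_abs)
  also have "\<dots> \<le> (\<Sum>i<nr. \<Sum>j<nc. \<bar>A $$ (i,j)\<bar> * (vnorm x * vnorm y))"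
  proof (intro sum_mono)
    fix i j assume i: "i \<in> {..<nr}" and j: "j \<in> {..<nc}"
    have "\<bar>x $ i\<bar> * \<bar>y $ j\<bar> \<le> vnorm x * vnorm y"
      using i j x y abs_index_le_vnorm[of i x] abs_index_le_vnorm[of j y]
      by (intro mult_mono) (auto simp: vnorm_nonneg)
    then have "\<bar>A $$ (i,j)\<bar> * (\<bar>x $ i\<bar> * \<bar>y $ j\<bar>) \<le> \<bar>A $$ (i,j)\<bar> * (vnorm x * vnorm y)"
      by (rule mult_left_mono) simp
    then show "\<bar>x $ i * A $$ (i,j) * y $ j\<bar> \<le> \<bar>A $$ (i,j)\<bar> * (vnorm x * vnorm y)"
      by (simp add: abs_mult mult_ac)
  qed
  also have "\<dots> = mat_l1_norm A * vnorm x * vnorm y"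
    unfolding mat_l1_norm_def using A by (simp add: sum_distrib_right mult.assoc)
  finally show ?thesis .
qed

lemma vnorm_mult_mat_vec_le_mat_l1_norm:
  assumes A: "A \<in> carrier_mat nr nc" and v: "v \<in> carrier_vec nc"
  shows "vnorm (A *\<^sub>v v) \<le> mat_l1_norm A * vnorm v"
proof (cases "vnorm (A *\<^sub>v v) = 0")
  case True
  then show ?thesis by (simp add: mat_l1_norm_nonneg vnorm_nonneg)
next
  case False
  have "vnorm (A *\<^sub>v v) * vnorm (A *\<^sub>v v) = (A *\<^sub>v v) \<bullet> (A *\<^sub>v v)"
    by (simp add: vnorm_square[symmetric] power2_eq_square)
  also have "\<dots> \<le> (mat_l1_norm A * vnorm v) * vnorm (A *\<^sub>v v)"
    using abs_bilinear_le_mat_l1_norm[OF A _ v, of "A *\<^sub>v v"] A v by (simp add: mult_ac)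
  finally show ?thesis using False vnorm_nonneg[of "A *\<^sub>v v"] by (simp add: mult_le_cancel_right)
qed

lemma vnorm_mult_mat_vec_le_mnorm2:
  assumes A: "A \<in> carrier_mat nr nc" and z: "z \<in> carrier_vec nc"
  shows "vnorm (A *\<^sub>v z) \<le> mnorm2 A * vnorm z"
proof -
  let ?S = "{vnorm (A *\<^sub>v v) | v. v \<in> carrier_vec (dim_col A) \<and> vnorm v \<le> 1}"
  have bdd: "bdd_above ?S"
  proof (rule bdd_aboveI)
    fix s assume "s \<in> ?S"
    then obtain v where v: "v \<in> carrier_vec nc" "vnorm v \<le> 1" and s: "s = vnorm (A *\<^sub>v v)"
      using A by auto
    have "s \<le> mat_l1_norm A * vnorm v" using s vnorm_mult_mat_vec_le_mat_l1_norm[OF A v(1)] by simp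
    also have "\<dots> \<le> mat_l1_norm A" using v(2) mat_l1_norm_nonneg[of A] by (simp add: mult_left_le)
    finally show "s \<le> mat_l1_norm A" .
  qed
  show ?thesis
  proof (cases "vnorm z = 0")
    case True
    then have "z = 0\<^sub>v nc" using scalar_prod_self_eq_zero[OF z] vnorm_square[of z] by simp
    then have "A *\<^sub>v z = 0\<^sub>v nr" using A by auto
    then show ?thesis using True by (simp add: vnorm_def)
  next
    case False
    then have zpos: "vnorm z > 0" using vnorm_nonneg[of z] by simp
    define v where "v = (1 / vnorm z) \<cdot>\<^sub>v z"
    have "vnorm v = 1" unfolding v_def vnorm_smult using zpos by simp
    then have "vnorm (A *\<^sub>v v) \<in> ?S" using z A unfolding v_def by auto
    then have "vnorm (A *\<^sub>v v) \<le> mnorm2 A" unfolding mnorm2_def by (rule cSup_upper[OF _ bdd])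
    moreover have "A *\<^sub>v v = (1 / vnorm z) \<cdot>\<^sub>v (A *\<^sub>v z)"
      unfolding v_def using A z by (simp add: mult_mat_vec)
    ultimately show ?thesis using zpos by (simp add: vnorm_smult field_simps)
  qed
qed

lemma quadratic_form_ge_neg_mnorm2:
  assumes A: "A \<in> carrier_mat n n" and z: "z \<in> carrier_vec n"
  shows "- (mnorm2 A * (vnorm z)^2) \<le> z \<bullet> (A *\<^sub>v z)"
proof -
  have "\<bar>z \<bullet> (A *\<^sub>v z)\<bar> \<le> vnorm z * vnorm (A *\<^sub>v z)"
    using abs_scalar_prod_le_vnorm[OF z] A z by simp
  also have "\<dots> \<le> vnorm z * (mnorm2 A * vnorm z)"
    using vnorm_mult_mat_vec_le_mnorm2[OF A z] vnorm_nonneg[of z] by (rule mult_left_mono)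
  finally show ?thesis by (simp add: power2_eq_square mult_ac)
qed

lemma minv_of_inverse:
  assumes A: "A \<in> carrier_mat n n" and B: "B \<in> carrier_mat n n"
    and AB: "A * B = 1\<^sub>m n" and BA: "B * A = 1\<^sub>m n"
  shows "minv A \<in> carrier_mat n n \<and> A * minv A = 1\<^sub>m n \<and> minv A * A = 1\<^sub>m n"
proof -
  have "\<exists>B. B \<in> carrier_mat n n \<and> A * B = 1\<^sub>m n \<and> B * A = 1\<^sub>m n" using B AB BA by blast
  from someI_ex[OF this] show ?thesis using A unfolding minv_def by simp
qed

lemma minv_of_invertible:
  assumes A: "A \<in> carrier_mat n n" and inv: "invertible_mat A"
  shows "minv A \<in> carrier_mat n n \<and> A * minv A = 1\<^sub>m n \<and> minv A * A = 1\<^sub>m n"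
proof -
  obtain B where AB: "A * B = 1\<^sub>m (dim_row A)" and BA: "B * A = 1\<^sub>m (dim_row B)"
    using inv unfolding invertible_mat_def inverts_mat_def by auto
  have "B \<in> carrier_mat n n"
    using A arg_cong[OF AB, of dim_col] arg_cong[OF BA, of dim_col] by auto
  then show ?thesis using minv_of_inverse[OF A] AB BA A by auto
qed

lemma minv_of_trivial_kernel:
  assumes A: "A \<in> carrier_mat n n"
    and ker: "\<And>v. v \<in> carrier_vec n \<Longrightarrow> A *\<^sub>v v = 0\<^sub>v n \<Longrightarrow> v = 0\<^sub>v n"
  shows "minv A \<in> carrier_mat n n \<and> A * minv A = 1\<^sub>m n \<and> minv A * A = 1\<^sub>m n"
proof -
  have "Determinant.det A \<noteq> 0" using det_0_iff_vec_prod_zero[OF A] ker by blast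
  from det_non_zero_imp_unit[OF A this, of undefined]
  obtain B where "B \<in> carrier_mat n n" "A * B = 1\<^sub>m n" "B * A = 1\<^sub>m n"
    unfolding Units_def ring_mat_def by auto
  then show ?thesis by (rule minv_of_inverse[OF A])
qed

lemma minv_sym_pos_def_carrier:
  assumes "sym_pos_def k R"
  shows "minv R \<in> carrier_mat k k"
proof -
  have R: "R \<in> carrier_mat k k"
    and pos: "\<And>v. v \<in> carrier_vec k \<Longrightarrow> v \<noteq> 0\<^sub>v k \<Longrightarrow> v \<bullet> (R *\<^sub>v v) > 0"
    using assms unfolding sym_pos_def_def by auto
  have "v = 0\<^sub>v k" if "v \<in> carrier_vec k" "R *\<^sub>v v = 0\<^sub>v k" for v
    using pos[of v] that by force
  then show ?thesis using minv_of_trivial_kernel[OF R] by blast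
qed

section \<open>Graph Laplacians\<close>

definition edge_weight :: "nat set set \<Rightarrow> nat \<Rightarrow> nat \<Rightarrow> real" where
  "edge_weight E i j = (if {i,j} \<in> E then 1 else 0)"

lemma edge_weight_sym: "edge_weight E i j = edge_weight E j i"
  unfolding edge_weight_def by (simp add: insert_commute)

lemma card_filter_lessThan_eq_sum:
  "real (card {k. k < (N::nat) \<and> P k}) = (\<Sum>k<N. if P k then 1 else 0)"
proof -
  have "{k. k < N \<and> P k} = {k\<in>{..<N}. P k}" by auto
  then have "real (card {k. k < N \<and> P k}) = (\<Sum>k\<in>{k\<in>{..<N}. P k}. 1)" by simp
  also have "\<dots> = (\<Sum>k<N. if P k then 1 else 0)" by (rule sum.inter_filter) simp
  finally show ?thesis .
qed

lemma laplacian_entry: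
  assumes sg: "simple_graph N E" and i: "i < N" and j: "j < N"
  shows "laplacian N E $$ (i,j) = (if i = j then (\<Sum>k<N. edge_weight E i k) else 0) - edge_weight E i j"
proof -
  have "{i,i} \<notin> E"
  proof
    assume "{i,i} \<in> E"
    then obtain a b where "{i} = {a,b}" "a \<noteq> b" using sg unfolding simple_graph_def by auto
    then have "a \<in> {i}" "b \<in> {i}" by auto
    then show False using \<open>a \<noteq> b\<close> by simp
  qed
  then show ?thesis using i j unfolding laplacian_def edge_weight_def
    by (auto simp: card_filter_lessThan_eq_sum)
qed

lemma abs_laplacian_entry_le:
  assumes i: "i < N" and j: "j < N"
  shows "\<bar>laplacian N E $$ (i,j)\<bar> \<le> real N"
proof -
  have "card {k. k < N \<and> {i, k} \<in> E} \<le> card {..<N}" by (rule card_mono) auto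
  then have "card {k. k < N \<and> {i, k} \<in> E} \<le> N" by simp
  moreover have "1 \<le> N" using i by simp
  ultimately show ?thesis using i j unfolding laplacian_def by auto
qed

lemma laplacian_row_sum:
  assumes sg: "simple_graph N E" and i: "i < N"
  shows "(\<Sum>j<N. laplacian N E $$ (i,j)) = 0"
proof -
  have "(\<Sum>j<N. laplacian N E $$ (i,j))
      = (\<Sum>j<N. (if i = j then (\<Sum>k<N. edge_weight E i k) else 0) - edge_weight E i j)"
    by (rule sum.cong) (auto simp: laplacian_entry[OF sg i])
  also have "\<dots> = 0" using i by (simp add: sum_subtractf)
  finally show ?thesis .
qed

text \<open>The Laplacian quadratic form is \<open>\<Sum>\<^sub>i\<^sub>j w\<^sub>i\<^sub>j (v\<^sub>i - v\<^sub>j)\<^sup>2 / 2\<close>.\<close>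

lemma laplacian_psd:
  assumes sg: "simple_graph N E" and v: "v \<in> carrier_vec N"
  shows "0 \<le> v \<bullet> (laplacian N E *\<^sub>v v)"
proof -
  let ?w = "edge_weight E"
  have L: "laplacian N E \<in> carrier_mat N N" unfolding laplacian_def by simp
  define S where "S = (\<Sum>i<N. \<Sum>j<N. ?w i j * ((v $ i)^2 - v $ i * v $ j))"
  have row: "(\<Sum>j<N. v $ i * laplacian N E $$ (i,j) * v $ j)
      = (\<Sum>j<N. ?w i j * ((v $ i)^2 - v $ i * v $ j))" if i: "i < N" for i
  proof -
    have "(\<Sum>j<N. v $ i * laplacian N E $$ (i,j) * v $ j)
        = (\<Sum>j<N. (if i = j then v $ i * (\<Sum>k<N. ?w i k) * v $ j else 0) - v $ i * ?w i j * v $ j)"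
      by (intro sum.cong) (auto simp: laplacian_entry[OF sg i] algebra_simps)
    also have "\<dots> = v $ i * (\<Sum>k<N. ?w i k) * v $ i - (\<Sum>j<N. v $ i * ?w i j * v $ j)"
      using i by (simp add: sum_subtractf)
    also have "\<dots> = (\<Sum>j<N. ?w i j * ((v $ i)^2 - v $ i * v $ j))"
      by (simp add: sum_distrib_left sum_distrib_right sum_subtractf[symmetric] algebra_simps
          power2_eq_square)
    finally show ?thesis .
  qed
  have q: "v \<bullet> (laplacian N E *\<^sub>v v) = S"
    unfolding scalar_prod_mult_mat_vec_expand[OF L v v] S_def by (rule sum.cong[OF refl]) (simp add: row)
  have "S = (\<Sum>i<N. \<Sum>j<N. ?w i j * ((v $ j)^2 - v $ j * v $ i))"
    unfolding S_def by (subst sum.swap) (simp add: edge_weight_sym)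
  then have "2 * S = S + (\<Sum>i<N. \<Sum>j<N. ?w i j * ((v $ j)^2 - v $ j * v $ i))" by simp
  also have "\<dots> = (\<Sum>i<N. \<Sum>j<N. ?w i j * (v $ i - v $ j)^2)"
    unfolding S_def by (simp add: sum.distrib[symmetric] algebra_simps power2_eq_square)
  finally have "2 * S = (\<Sum>i<N. \<Sum>j<N. ?w i j * (v $ i - v $ j)^2)" .
  moreover have "0 \<le> (\<Sum>i<N. \<Sum>j<N. ?w i j * (v $ i - v $ j)^2)"
    by (intro sum_nonneg mult_nonneg_nonneg) (auto simp: edge_weight_def)
  ultimately show ?thesis using q by simp
qed

lemma laplacian_entry_sym:
  "i < N \<Longrightarrow> j < N \<Longrightarrow> laplacian N E $$ (i,j) = laplacian N E $$ (j,i)"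
  unfolding laplacian_def by (auto simp: insert_commute)

lemma integrable_laplacian_entry:
  assumes "i < N" and "j < N"
  shows "integrable (measure_pmf G) (\<lambda>E. laplacian N E $$ (i,j))"
  by (rule measure_pmf.integrable_const_bound[where B = "real N"])
    (auto simp: abs_laplacian_entry_le[OF assms])

lemma expected_laplacian_carrier: "expected_laplacian N G \<in> carrier_mat N N"
  unfolding expected_laplacian_def by simp

lemma expected_laplacian_transpose: "transpose_mat (expected_laplacian N G) = expected_laplacian N G"
  by (rule eq_matI) (auto simp: expected_laplacian_def laplacian_entry_sym)

lemma expected_laplacian_psd:
  assumes sg: "\<And>E. E \<in> set_pmf G \<Longrightarrow> simple_graph N E" and v: "v \<in> carrier_vec N"
  shows "0 \<le> v \<bullet> (expected_laplacian N G *\<^sub>v v)"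
proof -
  have "v \<bullet> (expected_laplacian N G *\<^sub>v v)
      = (\<Sum>i<N. \<Sum>j<N. measure_pmf.expectation G (\<lambda>E. v $ i * laplacian N E $$ (i,j) * v $ j))"
    unfolding scalar_prod_mult_mat_vec_expand[OF expected_laplacian_carrier v v]
    by (intro sum.cong refl) (simp add: expected_laplacian_def mult.commute mult.left_commute)
  also have "\<dots> = (\<Sum>i<N. measure_pmf.expectation G (\<lambda>E. \<Sum>j<N. v $ i * laplacian N E $$ (i,j) * v $ j))"
    by (intro sum.cong refl, subst Bochner_Integration.integral_sum)
      (auto intro!: integrable_mult_left integrable_mult_right integrable_laplacian_entry)
  also have "\<dots> = measure_pmf.expectation G (\<lambda>E. \<Sum>i<N. \<Sum>j<N. v $ i * laplacian N E $$ (i,j) * v $ j)"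
    by (subst Bochner_Integration.integral_sum)
      (auto intro!: Bochner_Integration.integrable_sum integrable_mult_left integrable_mult_right
        integrable_laplacian_entry)
  also have "\<dots> = measure_pmf.expectation G (\<lambda>E. v \<bullet> (laplacian N E *\<^sub>v v))"
    by (intro Bochner_Integration.integral_cong refl, subst scalar_prod_mult_mat_vec_expand[OF _ v v])
      (auto simp: laplacian_def)
  also have "\<dots> \<ge> 0" by (intro integral_nonneg_AE AE_pmfI laplacian_psd sg v)
  finally show ?thesis .
qed

lemma expected_laplacian_mult_const:
  assumes sg: "\<And>E. E \<in> set_pmf G \<Longrightarrow> simple_graph N E"
  shows "expected_laplacian N G *\<^sub>v Matrix.vec N (\<lambda>_. c) = 0\<^sub>v N"
proof (rule eq_vecI)
  fix i assume "i < dim_vec (0\<^sub>v N :: real Matrix.vec)"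
  then have i: "i < N" by simp
  have "(\<Sum>j<N. expected_laplacian N G $$ (i,j))
      = measure_pmf.expectation G (\<lambda>E. \<Sum>j<N. laplacian N E $$ (i,j))"
    using i by (simp add: expected_laplacian_def Bochner_Integration.integral_sum integrable_laplacian_entry)
  also have "\<dots> = 0"
    by (subst integral_cong_AE[where g = "\<lambda>_. 0"]) (auto intro!: AE_pmfI simp: laplacian_row_sum[OF sg i])
  finally show "(expected_laplacian N G *\<^sub>v Matrix.vec N (\<lambda>_. c)) $ i = 0\<^sub>v N $ i"
    using i mult_mat_vec_index_sum[OF expected_laplacian_carrier, of "Matrix.vec N (\<lambda>_. c)" N i]
    by (simp add: sum_distrib_right[symmetric])
qed (simp add: expected_laplacian_def)

section \<open>Positivity of the second eigenvalue\<close>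

lemma sorted_list_of_multiset_second_eq_zero:
  fixes A :: "real multiset"
  assumes count: "count A 0 \<ge> 2" and nonneg: "\<And>x. x \<in># A \<Longrightarrow> 0 \<le> x"
  shows "sorted_list_of_multiset A ! 1 = 0"
proof -
  define xs where "xs = sorted_list_of_multiset A"
  have m: "mset xs = A" and s: "sorted xs" unfolding xs_def by auto
  obtain a b rest where xs: "xs = a # b # rest"
    using count m by (cases xs rule: remdups_adj.cases) (auto split: if_splits)
  have "b = 0"
  proof (rule ccontr)
    assume "b \<noteq> 0"
    then have "0 < b" using nonneg m xs by force
    then have "0 \<notin> set rest" using s xs by fastforce
    then have "count (mset rest) 0 = 0" by (simp add: count_eq_zero_iff)
    moreover have "count A 0 \<le> 1 + count (mset rest) 0" using m xs \<open>0 < b\<close> by auto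
    ultimately have "count A 0 \<le> 1" by linarith
    then show False using count by simp
  qed
  then show ?thesis using xs unfolding xs_def by simp
qed

lemma sum_lessThan_remove_reindex:
  fixes f :: "nat \<Rightarrow> real"
  assumes i: "i < N"
  shows "(\<Sum>j<N. f j) = f i + (\<Sum>l<N-1. f (if l < i then l else Suc l))"
proof -
  define g where "g = (\<lambda>l::nat. if l < i then l else Suc l)"
  have "bij_betw g {..<N-1} ({..<N}-{i})"
  proof (rule bij_betw_imageI)
    show "inj_on g {..<N-1}" unfolding inj_on_def g_def by auto
    show "g ` {..<N-1} = {..<N}-{i}"
    proof
      show "g ` {..<N-1} \<subseteq> {..<N}-{i}" using i unfolding g_def by auto
      show "{..<N}-{i} \<subseteq> g ` {..<N-1}"
      proof
        fix j assume j: "j \<in> {..<N}-{i}"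
        show "j \<in> g ` {..<N-1}"
          by (rule image_eqI[where x="if j < i then j else j - 1"]) (use j i in \<open>auto simp: g_def\<close>)
      qed
    qed
  qed
  then have "(\<Sum>l<N-1. f (g l)) = (\<Sum>j\<in>{..<N}-{i}. f j)" by (rule sum.reindex_bij_betw)
  moreover have "(\<Sum>j<N. f j) = f i + (\<Sum>j\<in>{..<N}-{i}. f j)" using i by (simp add: sum.remove)
  ultimately show ?thesis unfolding g_def by simp
qed

lemma mat_delete_eigenvalue_zero:
  fixes L :: "real mat"
  assumes L: "L \<in> carrier_mat N N" and i: "i < N"
    and y: "y \<in> carrier_vec N" and Ly: "L *\<^sub>v y = 0\<^sub>v N" and yi: "y $ i = 0"
    and ynz: "y \<noteq> 0\<^sub>v N"
  shows "eigenvalue (mat_delete L i i) 0"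
proof -
  have "\<exists>j<N. y $ j \<noteq> 0"
  proof (rule ccontr)
    assume "\<not> (\<exists>j<N. y $ j \<noteq> 0)"
    then have "y = 0\<^sub>v N" using y by (intro eq_vecI) auto
    then show False using ynz by simp
  qed
  then obtain j where j: "j < N" "y $ j \<noteq> 0" by blast
  have ji: "j \<noteq> i" using j yi by auto
  define g where "g = (\<lambda>l::nat. if l < i then l else Suc l)"
  define y' where "y' = Matrix.vec (N-1) (\<lambda>l. y $ g l)"
  have md: "mat_delete L i i \<in> carrier_mat (N-1) (N-1)" using mat_delete_carrier[OF L] .
  have y': "y' \<in> carrier_vec (N-1)" unfolding y'_def by simp
  have "y' \<noteq> 0\<^sub>v (N-1)"
  proof
    assume y0: "y' = 0\<^sub>v (N-1)"
    define l where "l = (if j < i then j else j - 1)"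
    have l: "l < N - 1" "g l = j" using j ji i unfolding l_def g_def by auto
    then show False using j arg_cong[OF y0, of "\<lambda>w. w $ l"] unfolding y'_def by simp
  qed
  moreover have "mat_delete L i i *\<^sub>v y' = 0 \<cdot>\<^sub>v y'"
  proof (rule eq_vecI)
    fix k assume "k < dim_vec (0 \<cdot>\<^sub>v y')"
    then have k: "k < N - 1" unfolding y'_def by simp
    have gk: "g k < N" using k unfolding g_def by auto
    have "(mat_delete L i i *\<^sub>v y') $ k = (\<Sum>l<N-1. L $$ (g k, g l) * y $ g l)"
      using mult_mat_vec_index_sum[OF md y' k] k L unfolding y'_def mat_delete_def g_def by simp
    also have "\<dots> = (\<Sum>j<N. L $$ (g k, j) * y $ j) - L $$ (g k, i) * y $ i"
      using sum_lessThan_remove_reindex[OF i, of "\<lambda>j. L $$ (g k, j) * y $ j"] unfolding g_def by simp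
    also have "(\<Sum>j<N. L $$ (g k, j) * y $ j) = 0"
      using mult_mat_vec_index_sum[OF L y gk] Ly gk by simp
    finally show "(mat_delete L i i *\<^sub>v y') $ k = (0 \<cdot>\<^sub>v y') $ k" using yi k unfolding y'_def by simp
  qed (use md y' L in simp)
  ultimately show ?thesis using y' md L unfolding eigenvalue_def eigenvector_def by auto
qed

text \<open>The derivative of the characteristic polynomial is the sum of the characteristic polynomials
  of the principal submatrices, so it also vanishes at \<open>0\<close>.\<close>

lemma char_poly_zero_multiplicity:
  fixes L :: "real mat"
  assumes L: "L \<in> carrier_mat N N" and N: "0 < N" and ev: "eigenvalue L 0"
    and ev_delete: "\<And>i. i < N \<Longrightarrow> eigenvalue (mat_delete L i i) 0"
  shows "2 \<le> count (proots (char_poly L)) 0"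
proof -
  define cp where "cp = char_poly L"
  have root: "poly cp 0 = 0" using ev eigenvalue_root_char_poly[OF L] unfolding cp_def by simp
  have "poly (pderiv cp) 0 = 0"
    unfolding cp_def pderiv_char_poly[OF L] poly_sum
    using ev_delete eigenvalue_root_char_poly[OF mat_delete_carrier[OF L]] by simp
  moreover have deg: "degree cp = N" using degree_monic_char_poly[OF L] unfolding cp_def by simp
  then have "pderiv cp \<noteq> 0" using N by (simp add: pderiv_eq_0_iff)
  ultimately have "order 0 (pderiv cp) \<noteq> 0" using order_root by blast
  moreover have "cp \<noteq> 0" using deg N by auto
  ultimately show ?thesis using order_pderiv[OF _ root] unfolding cp_def by simp
qed

lemma psd_char_poly_roots_nonneg:
  fixes L :: "real mat"
  assumes L: "L \<in> carrier_mat N N" and psd: "\<And>v. v \<in> carrier_vec N \<Longrightarrow> 0 \<le> v \<bullet> (L *\<^sub>v v)"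
    and x: "x \<in># proots (char_poly L)"
  shows "0 \<le> x"
proof -
  have "char_poly L \<noteq> 0" using x by auto
  then have "eigenvalue L x" using x eigenvalue_root_char_poly[OF L] by simp
  then obtain w where w: "w \<in> carrier_vec N" "w \<noteq> 0\<^sub>v N" "L *\<^sub>v w = x \<cdot>\<^sub>v w"
    using L unfolding eigenvalue_def eigenvector_def by auto
  have "0 \<le> x * (w \<bullet> w)" using psd[OF w(1)] w by simp
  moreover have "w \<bullet> w > 0"
    using scalar_prod_self_nonneg[of w] scalar_prod_self_eq_zero[OF w(1)] w(2) by force
  ultimately show ?thesis by (simp add: zero_le_mult_iff)
qed

text \<open>If \<open>L\<close> had a kernel vector \<open>v\<close> orthogonal to the constants, then \<open>0\<close> would be a double root
  of the characteristic polynomial (\<open>v - v\<^sub>i\<close> vanishes at \<open>i\<close>), forcing \<open>\<lambda>\<^sub>2 = 0\<close>.\<close>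

lemma lambda2_pos_kernel_trivial:
  fixes L :: "real mat"
  assumes L: "L \<in> carrier_mat N N" and N: "2 \<le> N"
    and psd: "\<And>v. v \<in> carrier_vec N \<Longrightarrow> 0 \<le> v \<bullet> (L *\<^sub>v v)"
    and const: "L *\<^sub>v Matrix.vec N (\<lambda>_. 1) = 0\<^sub>v N"
    and lambda2: "lambda2 L > 0"
    and v: "v \<in> carrier_vec N" and Lv: "L *\<^sub>v v = 0\<^sub>v N" and sum_zero: "(\<Sum>i<N. v $ i) = 0"
  shows "v = 0\<^sub>v N"
proof (rule ccontr)
  assume vnz: "v \<noteq> 0\<^sub>v N"
  define one where "one = Matrix.vec N (\<lambda>_. 1::real)"
  have one: "one \<in> carrier_vec N" unfolding one_def by simp
  have row_sum: "(\<Sum>j<N. L $$ (k,j)) = 0" if "k < N" for k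
    using mult_mat_vec_index_sum[OF L one that] const that unfolding one_def by simp
  have "eigenvalue L 0"
    unfolding eigenvalue_def eigenvector_def
  proof (intro exI[of _ one] conjI)
    have "one $ 0 \<noteq> 0\<^sub>v N $ 0" using N unfolding one_def by simp
    then show "one \<noteq> 0\<^sub>v (dim_row L)" using L by auto
  qed (use L one const in \<open>auto simp: one_def\<close>)
  moreover have "eigenvalue (mat_delete L i i) 0" if i: "i < N" for i
  proof (rule mat_delete_eigenvalue_zero[OF L i])
    define y where "y = v - v $ i \<cdot>\<^sub>v one"
    show y: "y \<in> carrier_vec N" using v one y_def by simp
    have yk: "y $ k = v $ k - v $ i" if "k < N" for k using that v unfolding y_def one_def by simp
    then show "y $ i = 0" using i by simp
    show "L *\<^sub>v y = 0\<^sub>v N"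
    proof (rule eq_vecI)
      fix k assume "k < dim_vec (0\<^sub>v N :: real Matrix.vec)"
      then have k: "k < N" by simp
      have "(L *\<^sub>v y) $ k = (\<Sum>j<N. L $$ (k,j) * v $ j) - (\<Sum>j<N. L $$ (k,j)) * v $ i"
        using mult_mat_vec_index_sum[OF L y k] yk
        by (simp add: algebra_simps sum_subtractf sum_distrib_left sum_distrib_right)
      then show "(L *\<^sub>v y) $ k = 0\<^sub>v N $ k"
        using mult_mat_vec_index_sum[OF L v k] Lv k row_sum[OF k] by simp
    qed (use L in simp)
    show "y \<noteq> 0\<^sub>v N"
    proof
      assume "y = 0\<^sub>v N"
      then have vk: "v $ k = v $ i" if "k < N" for k using yk[OF that] that by simp
      then have "v $ i = 0" using sum_zero N by simp
      then show False using vk v vnz by (auto intro!: eq_vecI)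
    qed
  qed
  ultimately have "2 \<le> count (proots (char_poly L)) 0"
    using char_poly_zero_multiplicity[OF L] N by simp
  then have "lambda2 L = 0"
    unfolding lambda2_def using psd_char_poly_roots_nonneg[OF L psd]
    by (rule sorted_list_of_multiset_second_eq_zero)
  then show False using lambda2 by simp
qed

text \<open>With \<open>T = S\<^sup>-\<^sup>1\<close>, Cauchy--Schwarz for the form of \<open>S\<close> gives
  \<open>(x\<^sup>Tx)\<^sup>2 = (x\<^sup>TS Tx)\<^sup>2 \<le> x\<^sup>TSx \<sqdot> x\<^sup>TTx\<close>, and \<open>x\<^sup>TTx\<close> is bounded by \<open>\<parallel>T\<parallel> x\<^sup>Tx\<close>.\<close>

lemma psd_trivial_kernel_coercive:
  fixes S :: "real mat"
  assumes S: "S \<in> carrier_mat n n" and sym: "transpose_mat S = S"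
    and psd: "\<And>v. v \<in> carrier_vec n \<Longrightarrow> 0 \<le> v \<bullet> (S *\<^sub>v v)"
    and ker: "\<And>v. v \<in> carrier_vec n \<Longrightarrow> S *\<^sub>v v = 0\<^sub>v n \<Longrightarrow> v = 0\<^sub>v n"
  shows "\<exists>c>0. \<forall>x\<in>carrier_vec n. c * (x \<bullet> x) \<le> x \<bullet> (S *\<^sub>v x)"
proof -
  define T where "T = minv S"
  have T: "T \<in> carrier_mat n n" and ST: "S * T = 1\<^sub>m n"
    using minv_of_trivial_kernel[OF S ker] unfolding T_def by auto
  have "x \<bullet> x \<le> (mat_l1_norm T + 1) * (x \<bullet> (S *\<^sub>v x))" if x: "x \<in> carrier_vec n" for x
  proof -
    define y where "y = T *\<^sub>v x"
    have y: "y \<in> carrier_vec n" using T x unfolding y_def by simp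
    have Sy: "S *\<^sub>v y = x" unfolding y_def using assoc_mult_mat_vec[OF S T x] ST x by simp
    have Sx: "0 \<le> x \<bullet> (S *\<^sub>v x)" using psd[OF x] .
    have "(x \<bullet> x)^2 = (x \<bullet> (S *\<^sub>v y))^2" using Sy by simp
    also have "\<dots> \<le> (x \<bullet> (S *\<^sub>v x)) * (y \<bullet> (S *\<^sub>v y))" by (rule psd_cauchy_schwarz[OF S sym psd x y])
    also have "y \<bullet> (S *\<^sub>v y) = x \<bullet> (T *\<^sub>v x)"
      unfolding Sy using comm_scalar_prod[OF y x] unfolding y_def by simp
    finally have CS: "(x \<bullet> x)^2 \<le> (x \<bullet> (S *\<^sub>v x)) * (x \<bullet> (T *\<^sub>v x))" .
    have "x \<bullet> (T *\<^sub>v x) \<le> mat_l1_norm T * (x \<bullet> x)"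
      using abs_bilinear_le_mat_l1_norm[OF T x x] vnorm_square[of x]
      by (simp add: power2_eq_square mult.assoc)
    then have "(x \<bullet> x) * (x \<bullet> x) \<le> ((x \<bullet> (S *\<^sub>v x)) * mat_l1_norm T) * (x \<bullet> x)"
      using CS mult_left_mono[OF _ Sx] by (fastforce simp: power2_eq_square mult_ac)
    then have "x \<bullet> x \<le> (x \<bullet> (S *\<^sub>v x)) * mat_l1_norm T"
      using scalar_prod_self_nonneg[of x] Sx mat_l1_norm_nonneg[of T]
      by (cases "x \<bullet> x = 0") (auto simp: mult_le_cancel_right)
    then show ?thesis using Sx by (simp add: algebra_simps)
  qed
  moreover have "0 < 1 / (mat_l1_norm T + 1)" using mat_l1_norm_nonneg[of T] by simp
  ultimately show ?thesis using mat_l1_norm_nonneg[of T]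
    by (intro exI[of _ "1 / (mat_l1_norm T + 1)"]) (auto simp: field_simps)
qed

text \<open>Adding the all-ones matrix \<open>J\<close> does not change the form on vectors of zero sum and makes it
  definite.\<close>

lemma coercive_on_sum_zero:
  fixes L :: "real mat"
  assumes L: "L \<in> carrier_mat N N" and sym: "transpose_mat L = L"
    and psd: "\<And>v. v \<in> carrier_vec N \<Longrightarrow> 0 \<le> v \<bullet> (L *\<^sub>v v)"
    and ker: "\<And>v. v \<in> carrier_vec N \<Longrightarrow> L *\<^sub>v v = 0\<^sub>v N \<Longrightarrow> (\<Sum>i<N. v $ i) = 0 \<Longrightarrow> v = 0\<^sub>v N"
  shows "\<exists>c>0. \<forall>x\<in>carrier_vec N. (\<Sum>i<N. x $ i) = 0 \<longrightarrow> c * (x \<bullet> x) \<le> x \<bullet> (L *\<^sub>v x)"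
proof -
  define J where "J = Matrix.mat N N (\<lambda>_. 1::real)"
  define S where "S = L + J"
  have J: "J \<in> carrier_mat N N" unfolding J_def by simp
  have S: "S \<in> carrier_mat N N" unfolding S_def using L J by simp
  have Sx: "x \<bullet> (S *\<^sub>v y) = x \<bullet> (L *\<^sub>v y) + (\<Sum>i<N. x $ i) * (\<Sum>i<N. y $ i)"
    if x: "x \<in> carrier_vec N" and y: "y \<in> carrier_vec N" for x y
  proof -
    have "x \<bullet> (J *\<^sub>v y) = (\<Sum>i<N. x $ i) * (\<Sum>i<N. y $ i)"
      using scalar_prod_mult_mat_vec_expand[OF J x y] unfolding J_def by (simp add: sum_product)
    then show ?thesis
      unfolding S_def add_mult_distrib_mat_vec[OF L J y]
      using scalar_prod_add_distrib[OF x, of "L *\<^sub>v y" "J *\<^sub>v y"] L J y by simp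
  qed
  have "L $$ (i,j) = L $$ (j,i)" if "i < N" "j < N" for i j
    using arg_cong[OF sym, of "\<lambda>M. M $$ (j,i)"] that L by simp
  then have "transpose_mat S = S" using L unfolding S_def J_def by (auto intro!: eq_matI)
  moreover have Spsd: "0 \<le> v \<bullet> (S *\<^sub>v v)" if v: "v \<in> carrier_vec N" for v
    using Sx[OF v v] psd[OF v] zero_le_square[of "\<Sum>i<N. v $ i"] by simp
  moreover have "v = 0\<^sub>v N" if v: "v \<in> carrier_vec N" and Sv: "S *\<^sub>v v = 0\<^sub>v N" for v
  proof -
    have "v \<bullet> (S *\<^sub>v v) = 0" using v Sv by simp
    then have "v \<bullet> (L *\<^sub>v v) = 0" and "(\<Sum>i<N. v $ i) * (\<Sum>i<N. v $ i) = 0"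
      using Sx[OF v v] psd[OF v] zero_le_square[of "\<Sum>i<N. v $ i"] by linarith+
    then have "v \<bullet> (L *\<^sub>v v) = 0" and s0: "(\<Sum>i<N. v $ i) = 0" by simp_all
    moreover have Lv: "L *\<^sub>v v \<in> carrier_vec N" using L v by simp
    ultimately have "(L *\<^sub>v v) \<bullet> (L *\<^sub>v v) = 0"
      using psd_cauchy_schwarz[OF L sym psd Lv v] by simp
    then show ?thesis using ker[OF v _ s0] scalar_prod_self_eq_zero[OF Lv] by simp
  qed
  ultimately obtain c where "c > 0" and c: "\<forall>x\<in>carrier_vec N. c * (x \<bullet> x) \<le> x \<bullet> (S *\<^sub>v x)"
    using psd_trivial_kernel_coercive[OF S] by blast
  have "c * (x \<bullet> x) \<le> x \<bullet> (L *\<^sub>v x)" if "x \<in> carrier_vec N" "(\<Sum>i<N. x $ i) = 0" for x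
    using c Sx[of x x] that by force
  then show ?thesis using \<open>c > 0\<close> by blast
qed

section \<open>Kronecker products and the consensus subspace\<close>

lemma sum_lessThan_mult_split:
  fixes f :: "nat \<Rightarrow> real"
  shows "(\<Sum>i<N*M. f i) = (\<Sum>k<N. \<Sum>m<M. f (k*M + m))"
proof -
  have "(\<Sum>i<N*M. f i) = (\<Sum>k<N. \<Sum>i\<in>{k*M..<k*M+M}. f i)" by (rule sum.nat_group[symmetric])
  also have "\<dots> = (\<Sum>k<N. \<Sum>m<M. f (k*M + m))"
  proof (rule sum.cong[OF refl])
    fix k
    have "(\<Sum>i\<in>{0+k*M..<M+k*M}. f i) = (\<Sum>m\<in>{0..<M}. f (m + k*M))" by (rule sum.shift_bounds_nat_ivl)
    then show "(\<Sum>i\<in>{k*M..<k*M+M}. f i) = (\<Sum>m<M. f (k*M + m))" by (simp add: atLeast0LessThan add.commute)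
  qed
  finally show ?thesis .
qed

lemma block_index_less:
  assumes "k < N" and "m < (M::nat)"
  shows "k*M + m < N*M"
proof -
  have "k*M + m < (k+1)*M" using assms by simp
  also have "\<dots> \<le> N*M" using assms by (intro mult_le_mono1) simp
  finally show ?thesis .
qed

text \<open>Vectors of \<open>\<real>\<^sup>N\<^sup>M\<close> are \<open>N\<close> stacked blocks of length \<open>M\<close>, one per agent.\<close>

definition coord_vec :: "nat \<Rightarrow> nat \<Rightarrow> real Matrix.vec \<Rightarrow> nat \<Rightarrow> real Matrix.vec" where
  "coord_vec N M z m = Matrix.vec N (\<lambda>k. z $ (k*M + m))"

lemma coord_vec_carrier [simp]: "coord_vec N M z m \<in> carrier_vec N"
  unfolding coord_vec_def by simp

lemma kron_carrier: "L \<in> carrier_mat N N \<Longrightarrow> kron L (1\<^sub>m M) \<in> carrier_mat (N*M) (N*M)"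
  unfolding kron_def by simp

lemma quadratic_form_kron_one:
  assumes L: "L \<in> carrier_mat N N" and z: "z \<in> carrier_vec (N*M)" and w: "w \<in> carrier_vec (N*M)"
  shows "z \<bullet> (kron L (1\<^sub>m M) *\<^sub>v w) = (\<Sum>m<M. coord_vec N M z m \<bullet> (L *\<^sub>v coord_vec N M w m))"
proof -
  let ?K = "kron L (1\<^sub>m M)"
  have entry: "?K $$ (k*M+m, l*M+m') = (if m = m' then L $$ (k,l) else 0)"
    if "k < N" "l < N" "m < M" "m' < M" for k l m m'
    using L that block_index_less[of k N m M] block_index_less[of l N m' M] unfolding kron_def by simp
  have "z \<bullet> (?K *\<^sub>v w) = (\<Sum>i<N*M. \<Sum>j<N*M. z $ i * ?K $$ (i,j) * w $ j)"
    by (rule scalar_prod_mult_mat_vec_expand[OF kron_carrier[OF L] z w])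
  also have "\<dots> = (\<Sum>k<N. \<Sum>m<M. \<Sum>l<N. \<Sum>m'<M. z $ (k*M+m) * ?K $$ (k*M+m, l*M+m') * w $ (l*M+m'))"
    by (simp add: sum_lessThan_mult_split)
  also have "\<dots> = (\<Sum>k<N. \<Sum>m<M. \<Sum>l<N. z $ (k*M+m) * L $$ (k,l) * w $ (l*M+m))"
    by (intro sum.cong refl) (simp add: entry if_distrib[of "\<lambda>x. _ * x * _"] cong: if_cong)
  also have "\<dots> = (\<Sum>m<M. \<Sum>k<N. \<Sum>l<N. z $ (k*M+m) * L $$ (k,l) * w $ (l*M+m))"
    by (rule sum.swap)
  also have "\<dots> = (\<Sum>m<M. coord_vec N M z m \<bullet> (L *\<^sub>v coord_vec N M w m))"
    unfolding scalar_prod_mult_mat_vec_expand[OF L coord_vec_carrier coord_vec_carrier]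
    by (auto simp: coord_vec_def intro!: sum.cong)
  finally show ?thesis .
qed

lemma dim_kron_ones [simp]: "dim_vec (kron_ones N a) = N * dim_vec a"
  unfolding kron_ones_def by simp

lemma kron_ones_carrier [simp]: "a \<in> carrier_vec M \<Longrightarrow> kron_ones N a \<in> carrier_vec (N*M)"
  unfolding kron_ones_def by simp

lemma kron_ones_index:
  "a \<in> carrier_vec M \<Longrightarrow> k < N \<Longrightarrow> m < M \<Longrightarrow> kron_ones N a $ (k*M + m) = a $ m"
  using block_index_less[of k N m M] unfolding kron_ones_def by simp

lemma scalar_prod_kron_ones:
  assumes z: "z \<in> carrier_vec (N*M)" and a: "a \<in> carrier_vec M"
  shows "z \<bullet> kron_ones N a = (\<Sum>m<M. a $ m * (\<Sum>k<N. z $ (k*M + m)))"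
proof -
  have "z \<bullet> kron_ones N a = (\<Sum>i<N*M. z $ i * a $ (i mod M))"
    using z a unfolding scalar_prod_def kron_ones_def by (simp add: atLeast0LessThan)
  also have "\<dots> = (\<Sum>k<N. \<Sum>m<M. z $ (k*M + m) * a $ m)" by (simp add: sum_lessThan_mult_split)
  also have "\<dots> = (\<Sum>m<M. a $ m * (\<Sum>k<N. z $ (k*M + m)))"
    by (subst sum.swap) (simp add: sum_distrib_left mult_ac)
  finally show ?thesis .
qed

lemma scalar_prod_self_coord_vec:
  assumes z: "z \<in> carrier_vec (N*M)"
  shows "z \<bullet> z = (\<Sum>m<M. coord_vec N M z m \<bullet> coord_vec N M z m)"
proof -
  have "z \<bullet> z = (\<Sum>k<N. \<Sum>m<M. (z $ (k*M + m))^2)"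
    using z by (simp add: scalar_prod_self_eq_sum_squares sum_lessThan_mult_split)
  also have "\<dots> = (\<Sum>m<M. coord_vec N M z m \<bullet> coord_vec N M z m)"
    by (subst sum.swap) (simp add: scalar_prod_self_eq_sum_squares coord_vec_def)
  finally show ?thesis .
qed

definition block_average :: "nat \<Rightarrow> nat \<Rightarrow> real Matrix.vec \<Rightarrow> real Matrix.vec" where
  "block_average N M z = Matrix.vec M (\<lambda>m. (1 / real N) * (\<Sum>k<N. z $ (k*M + m)))"

lemma block_average_carrier [simp]: "block_average N M z \<in> carrier_vec M"
  unfolding block_average_def by simp

lemma dim_block_average [simp]: "dim_vec (block_average N M z) = M"
  unfolding block_average_def by simp

lemma consensus_minus:
  assumes "x \<in> consensus N M" and "y \<in> consensus N M"
  shows "x - y \<in> consensus N M"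
proof -
  obtain a b where a: "a \<in> carrier_vec M" "x = kron_ones N a" and b: "b \<in> carrier_vec M" "y = kron_ones N b"
    using assms unfolding consensus_def by blast
  have "i mod M < M" if "i < N * M" for i using that by (cases "M = 0") auto
  then have "kron_ones N a - kron_ones N b = kron_ones N (a - b)"
    using a b unfolding kron_ones_def by (intro eq_vecI) auto
  then show ?thesis using a b unfolding consensus_def by auto
qed

lemma proj_perp_eq:
  assumes z: "z \<in> carrier_vec (N*M)" and N: "N > 0"
  shows "proj_perp N M z = z - kron_ones N (block_average N M z)"
    and "z - kron_ones N (block_average N M z) \<in> consensus_perp N M"
proof -
  define a where "a = block_average N M z"
  define p where "p = z - kron_ones N a"
  have a: "a \<in> carrier_vec M" unfolding a_def by simp
  have ka: "kron_ones N a \<in> carrier_vec (N*M)" using a by simp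
  have p: "p \<in> carrier_vec (N*M)" unfolding p_def using z ka by simp
  have pperp: "p \<in> consensus_perp N M"
    unfolding consensus_perp_def consensus_def
  proof (intro CollectI conjI p ballI)
    fix c assume "c \<in> {kron_ones N b |b. b \<in> carrier_vec M}"
    then obtain b where b: "b \<in> carrier_vec M" and c: "c = kron_ones N b" by blast
    have "(\<Sum>k<N. kron_ones N a $ (k*M + m)) = (\<Sum>k<N. z $ (k*M + m))" if "m < M" for m
      using that N a kron_ones_index[OF a] unfolding a_def block_average_def by simp
    then have "kron_ones N a \<bullet> kron_ones N b = z \<bullet> kron_ones N b"
      unfolding scalar_prod_kron_ones[OF ka b] scalar_prod_kron_ones[OF z b] by simp
    then show "p \<bullet> c = 0"
      unfolding p_def c using minus_scalar_prod_distrib[OF z ka kron_ones_carrier[OF b]] by simp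
  qed
  have zpc: "z - p \<in> consensus N M"
  proof -
    have "z - p = kron_ones N a" unfolding p_def using z ka by (intro eq_vecI) auto
    then show ?thesis unfolding consensus_def using a by blast
  qed
  have uniq: "q = p" if q: "q \<in> consensus_perp N M" "z - q \<in> consensus N M" for q
  proof -
    have qc: "q \<in> carrier_vec (N*M)" using q(1) unfolding consensus_perp_def by simp
    have "q - p = (z - p) - (z - q)" using z p qc by (intro eq_vecI) auto
    then have inC: "q - p \<in> consensus N M" using consensus_minus[OF zpc q(2)] by simp
    have "(q - p) \<bullet> (q - p) = q \<bullet> (q - p) - p \<bullet> (q - p)"
      by (rule minus_scalar_prod_distrib[OF qc p]) (use qc p in simp)
    also have "\<dots> = 0"
      using bspec[OF conjunct2[OF q(1)[unfolded consensus_perp_def mem_Collect_eq]] inC]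
        bspec[OF conjunct2[OF pperp[unfolded consensus_perp_def mem_Collect_eq]] inC] by simp
    finally have "q - p = 0\<^sub>v (N*M)" by (rule scalar_prod_self_eq_zero[rotated]) (use qc p in simp)
    then show "q = p" using qc p
      by (metis carrier_vecD index_minus_vec(1) index_zero_vec(1) eq_vecI right_minus_eq)
  qed
  have "proj_perp N M z = p"
    unfolding proj_perp_def
  proof (rule the_equality)
    show "p \<in> consensus_perp N M \<and> z - p \<in> consensus N M" using pperp zpc by blast
  qed (use uniq in blast)
  then show "proj_perp N M z = z - kron_ones N (block_average N M z)" unfolding p_def a_def .
  show "z - kron_ones N (block_average N M z) \<in> consensus_perp N M" using pperp unfolding p_def a_def .
qed

lemma coord_vec_sum_zero:
  assumes p: "p \<in> consensus_perp N M" and m: "m < M"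
  shows "(\<Sum>k<N. coord_vec N M p m $ k) = 0"
proof -
  have pc: "p \<in> carrier_vec (N*M)" using p unfolding consensus_perp_def by simp
  have "kron_ones N (unit_vec M m) \<in> consensus N M" unfolding consensus_def by auto
  then have "p \<bullet> kron_ones N (unit_vec M m) = 0" using p unfolding consensus_perp_def by auto
  moreover have "p \<bullet> kron_ones N (unit_vec M m) = (\<Sum>k<N. p $ (k*M + m))"
  proof -
    have "p \<bullet> kron_ones N (unit_vec M m) = (\<Sum>m'<M. unit_vec M m $ m' * (\<Sum>k<N. p $ (k*M + m')))"
      by (rule scalar_prod_kron_ones[OF pc]) simp
    also have "\<dots> = (\<Sum>m'<M. if m' = m then (\<Sum>k<N. p $ (k*M + m')) else 0)"
      by (intro sum.cong refl) (auto simp: unit_vec_def)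
    finally show ?thesis using m by simp
  qed
  ultimately show ?thesis unfolding coord_vec_def by simp
qed

lemma coercive_kron_on_consensus_perp:
  assumes L: "L \<in> carrier_mat N N"
    and coercive: "\<And>x. x \<in> carrier_vec N \<Longrightarrow> (\<Sum>i<N. x $ i) = 0 \<Longrightarrow> c * (x \<bullet> x) \<le> x \<bullet> (L *\<^sub>v x)"
    and p: "p \<in> consensus_perp N M"
  shows "c * (p \<bullet> p) \<le> p \<bullet> (kron L (1\<^sub>m M) *\<^sub>v p)"
proof -
  have pc: "p \<in> carrier_vec (N*M)" using p unfolding consensus_perp_def by simp
  have "c * (p \<bullet> p) = (\<Sum>m<M. c * (coord_vec N M p m \<bullet> coord_vec N M p m))"
    unfolding scalar_prod_self_coord_vec[OF pc] by (simp add: sum_distrib_left)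
  also have "\<dots> \<le> (\<Sum>m<M. coord_vec N M p m \<bullet> (L *\<^sub>v coord_vec N M p m))"
    by (intro sum_mono coercive coord_vec_carrier coord_vec_sum_zero[OF p]) simp
  also have "\<dots> = p \<bullet> (kron L (1\<^sub>m M) *\<^sub>v p)" by (rule quadratic_form_kron_one[OF L pc pc, symmetric])
  finally show ?thesis .
qed

lemma quadratic_form_add_const:
  fixes L :: "real mat"
  assumes L: "L \<in> carrier_mat N N" and sym: "transpose_mat L = L"
    and const: "\<And>c. L *\<^sub>v Matrix.vec N (\<lambda>_. c) = 0\<^sub>v N"
    and p: "p \<in> carrier_vec N"
  shows "(p + Matrix.vec N (\<lambda>_. c)) \<bullet> (L *\<^sub>v (p + Matrix.vec N (\<lambda>_. c))) = p \<bullet> (L *\<^sub>v p)"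
proof -
  let ?c = "Matrix.vec N (\<lambda>_. c)"
  have "?c \<bullet> (L *\<^sub>v p) = p \<bullet> (L *\<^sub>v ?c)" by (rule symmetric_bilinear_swap[OF L sym p]) simp
  then show ?thesis using bilinear_add_expand[OF L p, of ?c] const[of c] p by simp
qed

lemma quadratic_form_kron_proj_perp:
  fixes L :: "real mat"
  assumes L: "L \<in> carrier_mat N N" and sym: "transpose_mat L = L"
    and const: "\<And>c. L *\<^sub>v Matrix.vec N (\<lambda>_. c) = 0\<^sub>v N"
    and z: "z \<in> carrier_vec (N*M)" and N: "N > 0"
  shows "z \<bullet> (kron L (1\<^sub>m M) *\<^sub>v z) = proj_perp N M z \<bullet> (kron L (1\<^sub>m M) *\<^sub>v proj_perp N M z)"
proof -
  define a where "a = block_average N M z"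
  define p where "p = z - kron_ones N a"
  have a: "a \<in> carrier_vec M" unfolding a_def by simp
  have p: "p \<in> carrier_vec (N*M)" unfolding p_def using z a by simp
  have "coord_vec N M z m = coord_vec N M p m + Matrix.vec N (\<lambda>_. a $ m)" if m: "m < M" for m
    using z a m block_index_less[of _ N m M] kron_ones_index[OF a _ m] kron_ones_carrier[OF a, of N]
    unfolding coord_vec_def p_def by (intro eq_vecI) auto
  then have "z \<bullet> (kron L (1\<^sub>m M) *\<^sub>v z) = (\<Sum>m<M. coord_vec N M p m \<bullet> (L *\<^sub>v coord_vec N M p m))"
    unfolding quadratic_form_kron_one[OF L z z]
    by (intro sum.cong refl) (simp add: quadratic_form_add_const[OF L sym const])
  also have "\<dots> = p \<bullet> (kron L (1\<^sub>m M) *\<^sub>v p)" by (rule quadratic_form_kron_one[OF L p p, symmetric])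
  finally show ?thesis using proj_perp_eq(1)[OF z N] unfolding p_def a_def by simp
qed

lemma consensus_decomposition:
  assumes z: "z \<in> carrier_vec (N*M)" and N: "N > 0"
  obtains a where "a \<in> carrier_vec M" and "z = kron_ones N a + proj_perp N M z"
    and "kron_ones N a \<bullet> proj_perp N M z = 0" and "proj_perp N M z \<in> carrier_vec (N*M)"
proof
  let ?a = "block_average N M z"
  have perp: "proj_perp N M z \<in> consensus_perp N M" using proj_perp_eq[OF z N] by simp
  then show pc: "proj_perp N M z \<in> carrier_vec (N*M)" unfolding consensus_perp_def by simp
  have "kron_ones N ?a \<in> carrier_vec (N*M)" by simp
  then show "z = kron_ones N ?a + proj_perp N M z"
    unfolding proj_perp_eq(1)[OF z N] using z by (intro eq_vecI) auto
  have "kron_ones N ?a \<in> consensus N M" unfolding consensus_def by auto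
  then have "proj_perp N M z \<bullet> kron_ones N ?a = 0" using perp unfolding consensus_perp_def by blast
  then show "kron_ones N ?a \<bullet> proj_perp N M z = 0"
    using comm_scalar_prod[OF pc kron_ones_carrier[OF block_average_carrier]] by simp
qed simp

section \<open>Block-diagonal gains\<close>

lemma kron_ones_Suc:
  assumes a: "a \<in> carrier_vec M"
  shows "kron_ones (Suc n) a = a @\<^sub>v kron_ones n a"
proof (rule eq_vecI)
  fix i assume "i < dim_vec (a @\<^sub>v kron_ones n a)"
  then have i: "i < M + n * M" using a by simp
  show "kron_ones (Suc n) a $ i = (a @\<^sub>v kron_ones n a) $ i"
  proof (cases "i < M")
    case False
    then have "i mod M = (i - M) mod M" by (simp add: le_mod_geq)
    then show ?thesis using a i False unfolding kron_ones_def by simp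
  qed (use a i in \<open>simp add: kron_ones_def\<close>)
qed (use a in simp)

lemma kron_ones_self:
  assumes a: "a \<in> carrier_vec M"
  shows "kron_ones N a \<bullet> kron_ones N a = real N * (a \<bullet> a)"
proof -
  have "kron_ones N a \<bullet> kron_ones N a = (\<Sum>m<M. a $ m * (\<Sum>k<N. kron_ones N a $ (k*M + m)))"
    by (rule scalar_prod_kron_ones[OF kron_ones_carrier[OF a] a])
  also have "\<dots> = (\<Sum>m<M. a $ m * (real N * a $ m))"
    by (intro sum.cong refl) (simp add: kron_ones_index[OF a])
  also have "\<dots> = real N * (a \<bullet> a)"
    using a by (simp add: scalar_prod_self_eq_sum_squares sum_distrib_left power2_eq_square mult_ac)
  finally show ?thesis .
qed

lemma diag_block_mat_map_carrier:
  assumes "\<And>n. n < N \<Longrightarrow> A n \<in> carrier_mat (r n) (c n)"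
  shows "diag_block_mat (map A [0..<N]) \<in> carrier_mat (\<Sum>n<N. r n) (\<Sum>n<N. c n)"
proof -
  have sum_list: "sum_list (map f [0..<N]) = (\<Sum>n<N. f n)" for f :: "nat \<Rightarrow> nat"
    by (simp add: interv_sum_list_conv_sum_set_nat atLeast0LessThan)
  have "sum_list (map (dim_row \<circ> A) [0..<N]) = (\<Sum>n<N. r n)"
    and "sum_list (map (dim_col \<circ> A) [0..<N]) = (\<Sum>n<N. c n)"
    unfolding sum_list using assms by (auto intro!: sum.cong)
  then show ?thesis unfolding carrier_mat_def by (simp add: dim_diag_block_mat)
qed

lemma quadratic_form_diag_block_kron_ones:
  assumes K: "\<And>n. n < N \<Longrightarrow> K n \<in> carrier_mat M (r n)"
    and H: "\<And>n. n < N \<Longrightarrow> H n \<in> carrier_mat (r n) M"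
    and a: "a \<in> carrier_vec M"
  shows "kron_ones N a \<bullet> (diag_block_mat (map K [0..<N]) *\<^sub>v (diag_block_mat (map H [0..<N]) *\<^sub>v kron_ones N a))
    = (\<Sum>n<N. a \<bullet> (K n *\<^sub>v (H n *\<^sub>v a)))"
  using K H
proof (induction N arbitrary: K H r)
  case 0
  then show ?case unfolding kron_ones_def by (simp add: scalar_prod_def)
next
  case (Suc N)
  define Ks where "Ks = diag_block_mat (map (\<lambda>n. K (Suc n)) [0..<N])"
  define Hs where "Hs = diag_block_mat (map (\<lambda>n. H (Suc n)) [0..<N])"
  have K0: "K 0 \<in> carrier_mat M (r 0)" and H0: "H 0 \<in> carrier_mat (r 0) M" using Suc.prems by auto
  have Ks: "Ks \<in> carrier_mat (\<Sum>n<N. M) (\<Sum>n<N. r (Suc n))"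
    unfolding Ks_def by (rule diag_block_mat_map_carrier) (use Suc.prems in auto)
  have Hs: "Hs \<in> carrier_mat (\<Sum>n<N. r (Suc n)) (\<Sum>n<N. M)"
    unfolding Hs_def by (rule diag_block_mat_map_carrier) (use Suc.prems in auto)
  have ka: "kron_ones N a \<in> carrier_vec (\<Sum>n<N. M)" using a by simp
  have map_Suc: "map f [0..<Suc N] = f 0 # map (\<lambda>n. f (Suc n)) [0..<N]" for f :: "nat \<Rightarrow> real mat"
    by (simp add: upt_conv_Cons map_Suc_upt[symmetric] del: upt_Suc)
  have block: "four_block_mat A (0\<^sub>m n1 c2) (0\<^sub>m n2 c1) D *\<^sub>v (u @\<^sub>v w) = A *\<^sub>v u @\<^sub>v D *\<^sub>v w"
    if "A \<in> carrier_mat n1 c1" "D \<in> carrier_mat n2 c2" "u \<in> carrier_vec c1" "w \<in> carrier_vec c2"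
    for A D :: "real mat" and u w n1 n2 c1 c2
    by (subst four_block_mat_mult_vec) (use that in auto)
  have H_step: "diag_block_mat (map H [0..<Suc N]) *\<^sub>v kron_ones (Suc N) a = (H 0 *\<^sub>v a) @\<^sub>v (Hs *\<^sub>v kron_ones N a)"
    unfolding map_Suc kron_ones_Suc[OF a] diag_block_mat.simps Let_def Hs_def[symmetric]
    using block[OF H0 Hs a ka] H0 Hs by simp
  have K_step: "diag_block_mat (map K [0..<Suc N]) *\<^sub>v ((H 0 *\<^sub>v a) @\<^sub>v (Hs *\<^sub>v kron_ones N a))
      = (K 0 *\<^sub>v (H 0 *\<^sub>v a)) @\<^sub>v (Ks *\<^sub>v (Hs *\<^sub>v kron_ones N a))"
    unfolding map_Suc diag_block_mat.simps Let_def Ks_def[symmetric]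
    using block[OF K0 Ks, of "H 0 *\<^sub>v a" "Hs *\<^sub>v kron_ones N a"] K0 Ks H0 Hs a ka by simp
  have "kron_ones (Suc N) a \<bullet> (diag_block_mat (map K [0..<Suc N]) *\<^sub>v (diag_block_mat (map H [0..<Suc N]) *\<^sub>v kron_ones (Suc N) a))
      = a \<bullet> (K 0 *\<^sub>v (H 0 *\<^sub>v a)) + kron_ones N a \<bullet> (Ks *\<^sub>v (Hs *\<^sub>v kron_ones N a))"
    unfolding H_step K_step
    by (subst kron_ones_Suc[OF a], rule scalar_prod_append[of a M "kron_ones N a" "N * M"]) (use a K0 H0 Ks Hs in auto)
  also have "kron_ones N a \<bullet> (Ks *\<^sub>v (Hs *\<^sub>v kron_ones N a)) = (\<Sum>n<N. a \<bullet> (K (Suc n) *\<^sub>v (H (Suc n) *\<^sub>v a)))"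
    unfolding Ks_def Hs_def by (rule Suc.IH) (use Suc.prems in auto)
  finally show ?case by (simp only: sum.lessThan_Suc_shift)
qed

lemma sum_quadratic_inverse_average:
  fixes Y Sg :: "real mat" and G :: "nat \<Rightarrow> real mat"
  assumes Y: "Y \<in> carrier_mat M M" and Sg: "Sg \<in> carrier_mat M M" and YS: "Y * Sg = 1\<^sub>m M"
    and G: "\<And>n. n < N \<Longrightarrow> G n \<in> carrier_mat M M"
    and Sg_entry: "\<And>i j. i < M \<Longrightarrow> j < M \<Longrightarrow> Sg $$ (i,j) = (1 / real N) * (\<Sum>n<N. G n $$ (i,j))"
    and N: "N > 0" and a: "a \<in> carrier_vec M"
  shows "(\<Sum>n<N. a \<bullet> (Y *\<^sub>v (G n *\<^sub>v a))) = real N * (a \<bullet> a)"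
proof -
  define w where "w = Sg *\<^sub>v a"
  have w: "w \<in> carrier_vec M" unfolding w_def using Sg a by simp
  have Ga: "G n *\<^sub>v a \<in> carrier_vec M" if "n < N" for n using G[OF that] a by simp
  have sum_G: "(\<Sum>n<N. (G n *\<^sub>v a) $ j) = real N * w $ j" if j: "j < M" for j
  proof -
    have "(\<Sum>n<N. (G n *\<^sub>v a) $ j) = (\<Sum>l<M. (\<Sum>n<N. G n $$ (j,l)) * a $ l)"
      by (simp add: mult_mat_vec_index_sum[OF G a j] sum_distrib_right sum.swap[of _ "{..<N}"])
    also have "\<dots> = (\<Sum>l<M. (real N * Sg $$ (j,l)) * a $ l)"
      by (rule sum.cong[OF refl]) (use N j in \<open>simp add: Sg_entry\<close>)
    also have "\<dots> = real N * w $ j" unfolding w_def using mult_mat_vec_index_sum[OF Sg a j]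
      by (simp add: sum_distrib_left mult_ac)
    finally show ?thesis .
  qed
  have "(\<Sum>n<N. a \<bullet> (Y *\<^sub>v (G n *\<^sub>v a))) = (\<Sum>i<M. \<Sum>j<M. \<Sum>n<N. a $ i * Y $$ (i,j) * (G n *\<^sub>v a) $ j)"
    by (simp add: scalar_prod_mult_mat_vec_expand[OF Y a Ga] sum.swap[of _ "{..<N}"])
  also have "\<dots> = (\<Sum>i<M. \<Sum>j<M. a $ i * Y $$ (i,j) * (real N * w $ j))"
    by (intro sum.cong refl) (simp add: sum_distrib_left[symmetric] sum_G)
  also have "\<dots> = real N * (a \<bullet> (Y *\<^sub>v w))"
    by (simp add: scalar_prod_mult_mat_vec_expand[OF Y a w] sum_distrib_left mult_ac)
  also have "Y *\<^sub>v w = a" unfolding w_def using assoc_mult_mat_vec[OF Y Sg a, symmetric] YS a by simp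
  finally show ?thesis .
qed

text \<open>On \<open>1 \<otimes> a\<close> the form of \<open>\<K>\<H>\<close> is
  \<open>\<Sum>\<^sub>n a\<^sup>T \<Sigma>\<^sub>c\<^sup>-\<^sup>1 H\<^sub>n\<^sup>T R\<^sub>n\<^sup>-\<^sup>1 H\<^sub>n a = N a\<^sup>T \<Sigma>\<^sub>c\<^sup>-\<^sup>1 \<Sigma>\<^sub>c a = N |a|\<^sup>2\<close>.\<close>

lemma consensus_gain_form:
  fixes N M :: nat and Mn :: "nat \<Rightarrow> nat" and H R :: "nat \<Rightarrow> real mat"
  defines "Sigma_c \<equiv> Matrix.mat M M (\<lambda>(i,j). (1 / real N) *
              (\<Sum>n<N. ((H n)\<^sup>T * minv (R n) * H n) $$ (i,j)))"
  defines "K \<equiv> (\<lambda>n. minv Sigma_c * (H n)\<^sup>T * minv (R n))"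
  defines "Kcal \<equiv> diag_block_mat (map K [0..<N])"
  defines "Hcal \<equiv> diag_block_mat (map H [0..<N])"
  assumes H_dim: "\<And>n. n < N \<Longrightarrow> H n \<in> carrier_mat (Mn n) M"
    and R_spd: "\<And>n. n < N \<Longrightarrow> sym_pos_def (Mn n) (R n)"
    and Sigma_inv: "invertible_mat Sigma_c" and N: "0 < N"
  shows "Hcal \<in> carrier_mat (\<Sum>n<N. Mn n) (N * M)"
    and "Kcal * Hcal \<in> carrier_mat (N * M) (N * M)"
    and "\<And>a. a \<in> carrier_vec M \<Longrightarrow>
      kron_ones N a \<bullet> ((Kcal * Hcal) *\<^sub>v kron_ones N a) = kron_ones N a \<bullet> kron_ones N a"
proof -
  have Sc: "Sigma_c \<in> carrier_mat M M" unfolding Sigma_c_def by simp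
  have Y: "minv Sigma_c \<in> carrier_mat M M" and YS: "minv Sigma_c * Sigma_c = 1\<^sub>m M"
    using minv_of_invertible[OF Sc Sigma_inv] by auto
  have Rinv: "minv (R n) \<in> carrier_mat (Mn n) (Mn n)" if "n < N" for n
    by (rule minv_sym_pos_def_carrier[OF R_spd[OF that]])
  have Kn: "K n \<in> carrier_mat M (Mn n)" if "n < N" for n
    using Y H_dim[OF that] Rinv[OF that] unfolding K_def by simp
  have Hcal: "Hcal \<in> carrier_mat (\<Sum>n<N. Mn n) (\<Sum>n<N. M)"
    unfolding Hcal_def by (rule diag_block_mat_map_carrier[OF H_dim])
  then show "Hcal \<in> carrier_mat (\<Sum>n<N. Mn n) (N * M)" by simp
  have Kcal: "Kcal \<in> carrier_mat (\<Sum>n<N. M) (\<Sum>n<N. Mn n)"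
    unfolding Kcal_def by (rule diag_block_mat_map_carrier[OF Kn])
  with Hcal show "Kcal * Hcal \<in> carrier_mat (N * M) (N * M)" by simp
  fix a :: "real Matrix.vec" assume a: "a \<in> carrier_vec M"
  define G where "G = (\<lambda>n. (H n)\<^sup>T * minv (R n) * H n)"
  have KH: "K n *\<^sub>v (H n *\<^sub>v a) = minv Sigma_c *\<^sub>v (G n *\<^sub>v a)" if n: "n < N" for n
  proof -
    have H: "H n \<in> carrier_mat (Mn n) M" and Ht: "(H n)\<^sup>T \<in> carrier_mat M (Mn n)"
      and Ri: "minv (R n) \<in> carrier_mat (Mn n) (Mn n)" using H_dim[OF n] Rinv[OF n] by auto
    have Ha: "H n *\<^sub>v a \<in> carrier_vec (Mn n)" using H a by simp
    have "K n *\<^sub>v (H n *\<^sub>v a) = (minv Sigma_c * (H n)\<^sup>T) *\<^sub>v (minv (R n) *\<^sub>v (H n *\<^sub>v a))"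
      unfolding K_def by (rule assoc_mult_mat_vec) (use Y Ht Ri Ha in auto)
    also have "\<dots> = minv Sigma_c *\<^sub>v ((H n)\<^sup>T *\<^sub>v (minv (R n) *\<^sub>v (H n *\<^sub>v a)))"
      by (rule assoc_mult_mat_vec[OF Y Ht]) (use Ri Ha in simp)
    also have "(H n)\<^sup>T *\<^sub>v (minv (R n) *\<^sub>v (H n *\<^sub>v a)) = ((H n)\<^sup>T * minv (R n)) *\<^sub>v (H n *\<^sub>v a)"
      by (rule assoc_mult_mat_vec[OF Ht Ri Ha, symmetric])
    also have "\<dots> = G n *\<^sub>v a"
      unfolding G_def by (rule assoc_mult_mat_vec[symmetric]) (use Ht Ri H a in auto)
    finally show ?thesis .
  qed
  have "(\<Sum>n<N. a \<bullet> (K n *\<^sub>v (H n *\<^sub>v a))) = (\<Sum>n<N. a \<bullet> (minv Sigma_c *\<^sub>v (G n *\<^sub>v a)))"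
    by (simp add: KH)
  also have "\<dots> = real N * (a \<bullet> a)"
  proof (rule sum_quadratic_inverse_average[OF Y Sc YS _ _ N a])
    show "G n \<in> carrier_mat M M" if "n < N" for n
      using H_dim[OF that] Rinv[OF that] unfolding G_def by simp
  qed (simp add: G_def Sigma_c_def)
  ultimately have "(\<Sum>n<N. a \<bullet> (K n *\<^sub>v (H n *\<^sub>v a))) = real N * (a \<bullet> a)" by simp
  moreover have "(Kcal * Hcal) *\<^sub>v kron_ones N a = Kcal *\<^sub>v (Hcal *\<^sub>v kron_ones N a)"
    using Kcal Hcal a by (intro assoc_mult_mat_vec) auto
  ultimately show "kron_ones N a \<bullet> ((Kcal * Hcal) *\<^sub>v kron_ones N a) = kron_ones N a \<bullet> kron_ones N a"
    unfolding Kcal_def Hcal_def kron_ones_self[OF a]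
    by (simp add: quadratic_form_diag_block_kron_ones[OF Kn H_dim a])
qed

lemma expected_laplacian_kron_coercive:
  assumes sg: "\<And>E. E \<in> set_pmf G \<Longrightarrow> simple_graph N E" and N: "2 \<le> N"
    and lambda2: "lambda2 (expected_laplacian N G) > 0"
  obtains c where "c > 0"
    and "\<And>z. z \<in> carrier_vec (N*M) \<Longrightarrow>
      c * (vnorm (proj_perp N M z))^2 \<le> z \<bullet> (kron (expected_laplacian N G) (1\<^sub>m M) *\<^sub>v z)"
proof -
  let ?L = "expected_laplacian N G"
  note L = expected_laplacian_carrier and sym = expected_laplacian_transpose
    and psd = expected_laplacian_psd[OF sg] and const = expected_laplacian_mult_const[OF sg]
  obtain c where c: "c > 0"
    and coercive: "\<And>x. x \<in> carrier_vec N \<Longrightarrow> (\<Sum>i<N. x $ i) = 0 \<Longrightarrow> c * (x \<bullet> x) \<le> x \<bullet> (?L *\<^sub>v x)"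
    using coercive_on_sum_zero[OF L sym psd lambda2_pos_kernel_trivial[OF L N psd const lambda2]]
    by blast
  have "c * (vnorm (proj_perp N M z))^2 \<le> z \<bullet> (kron ?L (1\<^sub>m M) *\<^sub>v z)" if z: "z \<in> carrier_vec (N*M)" for z
    using coercive_kron_on_consensus_perp[OF L coercive proj_perp_eq(2)[OF z]]
      quadratic_form_kron_proj_perp[OF L sym const z] proj_perp_eq(1)[OF z] N
    by (simp add: vnorm_square)
  with c show ?thesis by (rule that)
qed

lemma eventually_powr_ratio_le:
  fixes a b \<tau>1 \<tau>2 \<delta> :: real
  assumes "a > 0" and "b > 0" and "\<tau>2 < \<tau>1" and "\<delta> > 0"
  shows "\<exists>t0::nat. \<forall>t\<ge>t0. a / (real t + 1) powr \<tau>1 \<le> \<delta> * (b / (real t + 1) powr \<tau>2)"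
proof -
  have "eventually (\<lambda>t. (real t + 1) powr (\<tau>2 - \<tau>1) < \<delta> * b / a) sequentially"
    using assms by real_asymp
  then obtain t0 where t0: "\<And>t. t \<ge> t0 \<Longrightarrow> (real t + 1) powr (\<tau>2 - \<tau>1) < \<delta> * b / a"
    unfolding eventually_sequentially by blast
  have "a / (real t + 1) powr \<tau>1 \<le> \<delta> * (b / (real t + 1) powr \<tau>2)" if "t \<ge> t0" for t
  proof -
    have "a * (real t + 1) powr (\<tau>2 - \<tau>1) \<le> \<delta> * b" using t0[OF that] assms by (simp add: field_simps)
    then show ?thesis using assms by (simp add: powr_diff field_simps)
  qed
  then show ?thesis by blast
qed

lemma perturbed_form_lower_bound:
  fixes A B :: "real mat"
  assumes A: "A \<in> carrier_mat n n" and B: "B \<in> carrier_mat n n" and close: "mnorm2 (A - B) \<le> \<epsilon>"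
    and F: "\<And>u v. u \<in> carrier_vec n \<Longrightarrow> v \<in> carrier_vec n \<Longrightarrow> \<bar>u \<bullet> (B *\<^sub>v v)\<bar> \<le> F * vnorm u * vnorm v"
    and x: "x \<in> carrier_vec n" and y: "y \<in> carrier_vec n" and orth: "x \<bullet> y = 0"
    and Bx: "x \<bullet> (B *\<^sub>v x) = x \<bullet> x"
  shows "(1 - \<epsilon>) * (vnorm x)^2 - 2 * F * vnorm x * vnorm y - (F + \<epsilon>) * (vnorm y)^2
    \<le> (x + y) \<bullet> (A *\<^sub>v (x + y))"
proof -
  let ?z = "x + y"
  have z: "?z \<in> carrier_vec n" using x y by simp
  have D: "A - B \<in> carrier_mat n n" by (rule minus_carrier_mat[OF B])
  have "(vnorm ?z)^2 = (vnorm x)^2 + (vnorm y)^2"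
    using bilinear_add_expand[OF one_carrier_mat x y] orth comm_scalar_prod[OF y x] x y
    by (simp add: vnorm_square)
  then have "- (\<epsilon> * ((vnorm x)^2 + (vnorm y)^2)) \<le> ?z \<bullet> ((A - B) *\<^sub>v ?z)"
    using quadratic_form_ge_neg_mnorm2[OF D z] mult_right_mono[OF close, of "(vnorm ?z)^2"] by simp
  moreover have "?z \<bullet> (A *\<^sub>v ?z) = ?z \<bullet> (B *\<^sub>v ?z) + ?z \<bullet> ((A - B) *\<^sub>v ?z)"
    using A B z by (simp add: minus_mult_distrib_mat_vec scalar_prod_minus_distrib[of ?z n])
  moreover have "(vnorm x)^2 - 2 * F * vnorm x * vnorm y - F * (vnorm y)^2 \<le> ?z \<bullet> (B *\<^sub>v ?z)"
  proof -
    have "- (F * vnorm x * vnorm y) \<le> x \<bullet> (B *\<^sub>v y)" "- (F * vnorm x * vnorm y) \<le> y \<bullet> (B *\<^sub>v x)"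
      "- (F * (vnorm y)^2) \<le> y \<bullet> (B *\<^sub>v y)"
      using F[OF x y] F[OF y x] F[OF y y] by (auto simp: mult_ac power2_eq_square)
    then show ?thesis using bilinear_add_expand[OF B x y] Bx vnorm_square[of x] by (simp add: algebra_simps)
  qed
  ultimately show ?thesis by (simp add: algebra_simps)
qed

text \<open>Completing the square: \<open>2Fcp \<le> (1-\<epsilon>)c\<^sup>2 + F\<^sup>2p\<^sup>2/(1-\<epsilon>)\<close>, so the gain term costs at most
  \<open>\<alpha>(F+1)\<^sup>2p\<^sup>2/(1-\<epsilon>)\<close>, which half the Laplacian term absorbs once \<open>\<alpha>/\<beta>\<close> is small.\<close>

lemma absorb_cross_term:
  fixes lam F \<epsilon> \<alpha> \<beta> c p l q :: real
  assumes \<epsilon>: "0 < \<epsilon>" "\<epsilon> < 1" and F: "0 \<le> F" and \<alpha>: "0 \<le> \<alpha>"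
    and small: "2 * (F + 1)^2 * \<alpha> \<le> lam * (1 - \<epsilon>) * \<beta>"
    and l: "lam * p^2 \<le> l" and \<beta>: "0 \<le> \<beta>"
    and q: "(1 - \<epsilon>) * c^2 - 2 * F * c * p - (F + \<epsilon>) * p^2 \<le> q"
  shows "lam / 2 * \<beta> * p^2 \<le> \<beta> * l + \<alpha> * q"
proof -
  have "0 \<le> ((1 - \<epsilon>) * c - F * p)^2" by simp
  then have square: "- (F^2 * p^2) \<le> (1 - \<epsilon>) * ((1 - \<epsilon>) * c^2 - 2 * F * c * p)"
    by (simp add: power2_eq_square algebra_simps)
  have "(1 - \<epsilon>) * (F + \<epsilon>) = F + \<epsilon> - F * \<epsilon> - \<epsilon> * \<epsilon>" by (simp add: algebra_simps)
  then have "(1 - \<epsilon>) * (F + \<epsilon>) \<le> 2 * F + 1"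
    using \<epsilon> F mult_nonneg_nonneg[of F \<epsilon>] mult_nonneg_nonneg[of \<epsilon> \<epsilon>] by linarith
  then have "(1 - \<epsilon>) * (F + \<epsilon>) * p^2 \<le> (2 * F + 1) * p^2" by (rule mult_right_mono) simp
  moreover have "(1 - \<epsilon>) * ((1 - \<epsilon>) * c^2 - 2 * F * c * p - (F + \<epsilon>) * p^2) \<le> (1 - \<epsilon>) * q"
    using q \<epsilon> by (intro mult_left_mono) auto
  ultimately have "- ((F + 1)^2 * p^2) \<le> (1 - \<epsilon>) * q"
    using square by (simp add: power2_eq_square algebra_simps)
  then have "\<alpha> * (- ((F + 1)^2 * p^2)) \<le> \<alpha> * ((1 - \<epsilon>) * q)" using \<alpha> by (rule mult_left_mono)
  then have "- (\<alpha> * ((F + 1)^2 * p^2)) \<le> (1 - \<epsilon>) * (\<alpha> * q)" by (simp add: mult.left_commute)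
  moreover have "\<alpha> * ((F + 1)^2 * p^2) \<le> (1 - \<epsilon>) * (lam / 2 * \<beta> * p^2)"
    using mult_right_mono[OF small, of "p^2 / 2"] by (simp add: algebra_simps)
  ultimately have "0 \<le> (1 - \<epsilon>) * (\<alpha> * q + lam / 2 * \<beta> * p^2)" by (simp add: distrib_left)
  then have "- (lam / 2 * \<beta> * p^2) \<le> \<alpha> * q" using \<epsilon> by (simp add: zero_le_mult_iff)
  moreover have "\<beta> * (lam * p^2) \<le> \<beta> * l" using l \<beta> by (rule mult_left_mono)
  ultimately show ?thesis by (simp add: algebra_simps)
qed

lemma consensus_form_lower_bound:
  fixes L A B :: "real mat"
  assumes L: "L \<in> carrier_mat (N*M) (N*M)" and A: "A \<in> carrier_mat (N*M) (N*M)"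
    and B: "B \<in> carrier_mat (N*M) (N*M)" and N: "0 < N" and z: "z \<in> carrier_vec (N*M)"
    and coercive: "lam * (vnorm (proj_perp N M z))^2 \<le> z \<bullet> (L *\<^sub>v z)"
    and B_consensus: "\<And>a. a \<in> carrier_vec M \<Longrightarrow>
      kron_ones N a \<bullet> (B *\<^sub>v kron_ones N a) = kron_ones N a \<bullet> kron_ones N a"
    and close: "mnorm2 (A - B) \<le> \<epsilon>" and \<epsilon>: "0 < \<epsilon>" "\<epsilon> < 1"
    and ratio: "\<alpha> \<le> lam * (1 - \<epsilon>) / (2 * (mat_l1_norm B + 1)^2) * \<beta>"
    and \<alpha>: "0 \<le> \<alpha>" and \<beta>: "0 \<le> \<beta>"
  shows "lam / 2 * \<beta> * (vnorm (proj_perp N M z))^2 \<le> z \<bullet> ((\<beta> \<cdot>\<^sub>m L + \<alpha> \<cdot>\<^sub>m A) *\<^sub>v z)"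
proof -
  obtain a where a: "a \<in> carrier_vec M" and z_eq: "z = kron_ones N a + proj_perp N M z"
    and orth: "kron_ones N a \<bullet> proj_perp N M z = 0" and p: "proj_perp N M z \<in> carrier_vec (N * M)"
    using consensus_decomposition[OF z N] .
  have "(1 - \<epsilon>) * (vnorm (kron_ones N a))^2 - 2 * mat_l1_norm B * vnorm (kron_ones N a) * vnorm (proj_perp N M z)
      - (mat_l1_norm B + \<epsilon>) * (vnorm (proj_perp N M z))^2 \<le> z \<bullet> (A *\<^sub>v z)"
    using perturbed_form_lower_bound[OF A B close abs_bilinear_le_mat_l1_norm[OF B]
        kron_ones_carrier[OF a] p orth B_consensus[OF a]] z_eq by simp
  moreover have "2 * (mat_l1_norm B + 1)^2 * \<alpha> \<le> lam * (1 - \<epsilon>) * \<beta>"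
    using ratio mat_l1_norm_nonneg[of B] by (simp add: field_simps)
  ultimately show ?thesis
    unfolding quadratic_form_smult_add[OF L A z]
    using absorb_cross_term[OF \<epsilon> mat_l1_norm_nonneg \<alpha> _ coercive \<beta>] by blast
qed

theorem proposition5p6:
  fixes N M :: nat and Mn :: "nat \<Rightarrow> nat"
    and H R :: "nat \<Rightarrow> real mat"
    and G :: "nat set set pmf"
    and a b \<tau>1 \<tau>2 \<epsilon>1 :: real
  defines "Sigma_c \<equiv> Matrix.mat M M (\<lambda>(i,j). (1 / real N) *
              (\<Sum>n<N. ((H n)\<^sup>T * minv (R n) * H n) $$ (i,j)))"
  defines "K \<equiv> (\<lambda>n. minv Sigma_c * (H n)\<^sup>T * minv (R n))"
  defines "Kcal \<equiv> diag_block_mat (map K [0..<N])"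
  defines "Hcal \<equiv> diag_block_mat (map H [0..<N])"
  defines "Lbar \<equiv> expected_laplacian N G"
  defines "\<alpha> \<equiv> (\<lambda>t::nat. a / (real t + 1) powr \<tau>1)"
  defines "\<beta> \<equiv> (\<lambda>t::nat. b / (real t + 1) powr \<tau>2)"
  assumes H_dim: "\<And>n. n < N \<Longrightarrow> H n \<in> carrier_mat (Mn n) M"
    and R_spd: "\<And>n. n < N \<Longrightarrow> sym_pos_def (Mn n) (R n)"
    and Sigma_inv: "invertible_mat Sigma_c"
    and G_graphs: "\<And>E. E \<in> set_pmf G \<Longrightarrow> simple_graph N E"
    and N_ge2: "2 \<le> N"
    and lambda2_pos: "lambda2 Lbar > 0"
    and ab: "a > 0" "b > 0"
    and taus: "0 < \<tau>2" "\<tau>2 \<le> \<tau>1" "\<tau>1 \<le> 1"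
    and eps1: "\<epsilon>1 > 0" "\<tau>1 > \<tau>2 + 1 / (2 + \<epsilon>1) + 1 / 2"
  shows "\<forall>\<epsilon>::real. 0 < \<epsilon> \<and> \<epsilon> < 1 \<longrightarrow>
    (\<exists>t\<epsilon>::nat. \<exists>c\<epsilon>::real. c\<epsilon> > 0 \<and>
      (\<forall>t \<ge> t\<epsilon>. \<forall>z \<in> carrier_vec (N * M).
        \<forall>Kt \<in> carrier_mat (N * M) (\<Sum>n<N. Mn n).
          mnorm2 (Kt * Hcal - Kcal * Hcal) \<le> \<epsilon> \<longrightarrow>
          scalar_prod z ((\<beta> t \<cdot>\<^sub>m kron Lbar (1\<^sub>m M) + \<alpha> t \<cdot>\<^sub>m (Kt * Hcal)) *\<^sub>v z)
            \<ge> c\<epsilon> * \<beta> t * (vnorm (proj_perp N M z))\<^sup>2))"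
proof (intro allI impI)
  fix \<epsilon> :: real assume \<epsilon>: "0 < \<epsilon> \<and> \<epsilon> < 1"
  have N: "0 < N" using N_ge2 by simp
  obtain lam where lam: "lam > 0"
    and laplacian: "\<And>z. z \<in> carrier_vec (N*M) \<Longrightarrow>
      lam * (vnorm (proj_perp N M z))^2 \<le> z \<bullet> (kron Lbar (1\<^sub>m M) *\<^sub>v z)"
    using expected_laplacian_kron_coercive[OF G_graphs N_ge2 lambda2_pos[unfolded Lbar_def]]
    unfolding Lbar_def by blast
  have Hcal: "Hcal \<in> carrier_mat (\<Sum>n<N. Mn n) (N * M)"
    and B: "Kcal * Hcal \<in> carrier_mat (N * M) (N * M)"
    and B_consensus: "\<And>a. a \<in> carrier_vec M \<Longrightarrow>
      kron_ones N a \<bullet> ((Kcal * Hcal) *\<^sub>v kron_ones N a) = kron_ones N a \<bullet> kron_ones N a"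
    using consensus_gain_form[OF H_dim R_spd Sigma_inv[unfolded Sigma_c_def] N]
    unfolding Hcal_def Kcal_def K_def Sigma_c_def by auto
  have Lk: "kron Lbar (1\<^sub>m M) \<in> carrier_mat (N * M) (N * M)"
    unfolding Lbar_def by (rule kron_carrier[OF expected_laplacian_carrier])
  have "\<tau>2 < \<tau>1" using eps1 by (smt (verit) divide_pos_pos)
  moreover have "0 < lam * (1 - \<epsilon>) / (2 * (mat_l1_norm (Kcal * Hcal) + 1)^2)"
    using lam \<epsilon> mat_l1_norm_nonneg[of "Kcal * Hcal"] by simp
  ultimately obtain t0 where t0: "\<And>t. t \<ge> t0 \<Longrightarrow>
      \<alpha> t \<le> lam * (1 - \<epsilon>) / (2 * (mat_l1_norm (Kcal * Hcal) + 1)^2) * \<beta> t"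
    using eventually_powr_ratio_le[OF ab] unfolding \<alpha>_def \<beta>_def by blast
  show "\<exists>t\<epsilon> c\<epsilon>. c\<epsilon> > 0 \<and> (\<forall>t \<ge> t\<epsilon>. \<forall>z \<in> carrier_vec (N * M).
    \<forall>Kt \<in> carrier_mat (N * M) (\<Sum>n<N. Mn n). mnorm2 (Kt * Hcal - Kcal * Hcal) \<le> \<epsilon> \<longrightarrow>
      scalar_prod z ((\<beta> t \<cdot>\<^sub>m kron Lbar (1\<^sub>m M) + \<alpha> t \<cdot>\<^sub>m (Kt * Hcal)) *\<^sub>v z)
        \<ge> c\<epsilon> * \<beta> t * (vnorm (proj_perp N M z))\<^sup>2)"
  proof (intro exI[of _ t0] exI[of _ "lam / 2"] conjI allI impI ballI)
    fix t :: nat and z :: "real Matrix.vec" and Kt :: "real mat"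
    assume "t0 \<le> t" and z: "z \<in> carrier_vec (N * M)" and "Kt \<in> carrier_mat (N * M) (\<Sum>n<N. Mn n)"
      and "mnorm2 (Kt * Hcal - Kcal * Hcal) \<le> \<epsilon>"
    then show "lam / 2 * \<beta> t * (vnorm (proj_perp N M z))\<^sup>2
        \<le> z \<bullet> ((\<beta> t \<cdot>\<^sub>m kron Lbar (1\<^sub>m M) + \<alpha> t \<cdot>\<^sub>m (Kt * Hcal)) *\<^sub>v z)"
      using consensus_form_lower_bound[OF Lk _ B N z laplacian[OF z] B_consensus _ _ _ t0]
        Hcal \<epsilon> ab by (simp add: \<alpha>_def \<beta>_def)
  qed (use lam in simp)
qed

end
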